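(* Fix $c>0$ and $0\le\alpha\le 1$, and for each $n$ put $t=\lfloor cn^{\alpha}\rfloor$; assume $1\le t\le \frac{n+1}{2}$ (for all large $n$). For each such $n$, let $\sigma$ be any sign assignment on the arcs of $K_{n+1}$ (as in the context) whose set $M$ of marked edges is a $t$-matching. Let $u\in\mathbb{C}^{\mathcal{A}}$ be the uniform state $u(a)=1/\sqrt{n(n+1)}$ for all $a\in\mathcal{A}$, and let $\psi_k=U_\sigma^k u$. Let $$\lambda_m=\frac{n-3+\sqrt{(n+3)^2-16t}}{2n}$$ (the largest eigenvalue of $T_\sigma$), $\theta_m=\arccos\lambda_m$, and $k_f=\lfloor \pi/(2\theta_m)\rfloor$. Then, as $n\to\infty$, $k_f=\Theta\big(n^{\frac{2-\alpha}{2}}\big)$, and the probability of finding the walker on a marked edge at time $k_f$, $$\sum_{e=xy\in M}\Big(|\psi_{k_f}((x,y))|^2+|\psi_{k_f}((y,x))|^2\Big),$$ equals $1-o(1)$. In particular, the quantum walk driven by $U_\sigma$ finds a marked edge with time complexity $O\big(n^{\frac{2-\alpha}{2}}\big)$.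
   Context: Setting. $K_{n+1}$ is the complete graph on the vertex set $V$ with $|V|=n+1$ ($n\ge 2$), edge set $E$; every vertex has degree $n$. The arc set is $\mathcal{A}=\{(x,y): x,y\in V, x\ne y\}$; for an arc $a=(x,y)$, $o(a)=x$ is its origin, $t(a)=y$ its terminus, and $a^{-1}=(y,x)$. A map $\sigma:\mathcal{A}\to\{\pm1\}$ is required to satisfy: $\sigma(a)=-1$ implies $\sigma(a^{-1})=1$. Put $\mathcal{M}=\{a\in\mathcal{A}:\sigma(a)=-1\}$, $\mathcal{M}^{-1}=\{a^{-1}:a\in\mathcal{M}\}$, $\tau(xy)=\sigma((x,y))\sigma((y,x))$ for $xy\in E$, and $M=\{e\in E:\tau(e)=-1\}$ (the marked edges); $\partial M$ is the set of endpoints of edges in $M$. A $t$-matching is a set of $t$ pairwise vertex-disjoint edges. Define $w(a)=-1/\sqrt{n}$ if $a\in\mathcal{M}$ and $w(a)=1/\sqrt{n}$ otherwise; $d_\sigma:\mathbb{C}^{\mathcal{A}}\to\mathbb{C}^V$ has entries $(d_\sigma)_{v,a}=w(a)$ if $t(a)=v$ and $0$ otherwise; $S$ on $\mathbb{C}^{\mathcal{A}}$ is the arc-reversal permutation, $S_{a,b}=1$ if $a=b^{-1}$ and $0$ otherwise. The time evolution operator is the unitary $U_\sigma=S(2d_\sigma^*d_\sigma-I_{\mathcal{A}})$, and $T_\sigma=d_\sigma S d_\sigma^*$ (a matrix on $\mathbb{C}^V$). *)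

theory Defs
  imports Complex_Main "HOL-Library.Landau_Symbols"
begin

definition arcs :: "nat \<Rightarrow> (nat \<times> nat) set" where
  "arcs n = {(x, y). x \<le> n \<and> y \<le> n \<and> x \<noteq> y}"

definition rev_arc :: "nat \<times> nat \<Rightarrow> nat \<times> nat" where
  "rev_arc a = (snd a, fst a)"

definition sign_assignment :: "nat \<Rightarrow> (nat \<times> nat \<Rightarrow> int) \<Rightarrow> bool" where
  "sign_assignment n \<sigma> \<longleftrightarrow>
     (\<forall>a\<in>arcs n. (\<sigma> a = -1 \<or> \<sigma> a = 1) \<and> (\<sigma> a = -1 \<longrightarrow> \<sigma> (rev_arc a) = 1))"

definition marked_edges :: "nat \<Rightarrow> (nat \<times> nat \<Rightarrow> int) \<Rightarrow> nat set set" where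
  "marked_edges n \<sigma> = {{x, y} | x y. (x, y) \<in> arcs n \<and> \<sigma> (x, y) * \<sigma> (y, x) = -1}"

definition is_matching :: "nat \<Rightarrow> nat set set \<Rightarrow> bool" where
  "is_matching t M \<longleftrightarrow> finite M \<and> card M = t \<and>
     (\<forall>e\<in>M. \<forall>e'\<in>M. e \<noteq> e' \<longrightarrow> e \<inter> e' = {})"

definition wt :: "nat \<Rightarrow> (nat \<times> nat \<Rightarrow> int) \<Rightarrow> nat \<times> nat \<Rightarrow> real" where
  "wt n \<sigma> a = (if \<sigma> a = -1 then -1 else 1) / sqrt (real n)"

definition d_op :: "nat \<Rightarrow> (nat \<times> nat \<Rightarrow> int) \<Rightarrow> (nat \<times> nat \<Rightarrow> complex) \<Rightarrow> nat \<Rightarrow> complex" where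
  "d_op n \<sigma> \<psi> v = (\<Sum>a\<in>{a\<in>arcs n. snd a = v}. complex_of_real (wt n \<sigma> a) * \<psi> a)"

definition d_adj :: "nat \<Rightarrow> (nat \<times> nat \<Rightarrow> int) \<Rightarrow> (nat \<Rightarrow> complex) \<Rightarrow> nat \<times> nat \<Rightarrow> complex" where
  "d_adj n \<sigma> f a = (if a \<in> arcs n then complex_of_real (wt n \<sigma> a) * f (snd a) else 0)"

definition S_op :: "nat \<Rightarrow> (nat \<times> nat \<Rightarrow> complex) \<Rightarrow> nat \<times> nat \<Rightarrow> complex" where
  "S_op n \<psi> a = (if a \<in> arcs n then \<psi> (rev_arc a) else 0)"

definition U_op :: "nat \<Rightarrow> (nat \<times> nat \<Rightarrow> int) \<Rightarrow> (nat \<times> nat \<Rightarrow> complex) \<Rightarrow> nat \<times> nat \<Rightarrow> complex" where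
  "U_op n \<sigma> \<psi> = S_op n (\<lambda>a. 2 * d_adj n \<sigma> (d_op n \<sigma> \<psi>) a - \<psi> a)"

definition unif :: "nat \<Rightarrow> nat \<times> nat \<Rightarrow> complex" where
  "unif n a = (if a \<in> arcs n then complex_of_real (1 / sqrt (real n * (real n + 1))) else 0)"

definition psi :: "nat \<Rightarrow> (nat \<times> nat \<Rightarrow> int) \<Rightarrow> nat \<Rightarrow> nat \<times> nat \<Rightarrow> complex" where
  "psi n \<sigma> k = (U_op n \<sigma> ^^ k) (unif n)"

text \<open>Probability of finding the walker on a marked edge:
  sum over e = xy in M of |psi((x,y))|^2 + |psi((y,x))|^2 = sum over arcs whose edge is marked.\<close>
definition success_prob :: "nat \<Rightarrow> (nat \<times> nat \<Rightarrow> int) \<Rightarrow> nat \<Rightarrow> real" where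
  "success_prob n \<sigma> k =
     (\<Sum>a\<in>{a\<in>arcs n. {fst a, snd a} \<in> marked_edges n \<sigma>}. (cmod (psi n \<sigma> k a))\<^sup>2)"

definition t_of :: "real \<Rightarrow> real \<Rightarrow> nat \<Rightarrow> nat" where
  "t_of c \<alpha> n = nat \<lfloor>c * real n powr \<alpha>\<rfloor>"

definition lambda_m :: "nat \<Rightarrow> nat \<Rightarrow> real" where
  "lambda_m n t = (real n - 3 + sqrt ((real n + 3)\<^sup>2 - 16 * real t)) / (2 * real n)"

definition k_f :: "nat \<Rightarrow> nat \<Rightarrow> nat" where
  "k_f n t = nat \<lfloor>pi / (2 * arccos (lambda_m n t))\<rfloor>"

end

theory Submission
  imports Defs "HOL-Real_Asymp.Real_Asymp"
begin

text \<open>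
  Vectors of the form \<open>d\<^sup>* P + S d\<^sup>* Q\<close> (P, Q functions on vertices) are mapped by
  \<open>U\<^sub>\<sigma>\<close> to vectors of the same form, with \<open>(P, Q) \<mapsto> (-Q, P + 2 T\<^sub>\<sigma> Q)\<close>; on the
  vectors killed by \<open>d\<close> and \<open>d S\<close> it acts as \<open>-S\<close>. Splitting the uniform state accordingly,
  \<open>\<psi>\<^sub>k\<close> is governed by a Chebyshev-type recurrence in \<open>T\<^sub>\<sigma>\<close>. When the marked edges
  form a t-matching, functions constant on the tails, the heads and the unmatched vertices
  span a \<open>T\<^sub>\<sigma>\<close>-invariant space containing \<open>d u\<close>, with eigenvalues \<open>1/n\<close> and
  \<open>\<lambda>\<^sub>\<plusminus> = (n - 3 \<plusminus> \<surd>((n+3)\<^sup>2 - 16t)) / 2n\<close>. This gives the success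
  probability in closed form; at time \<open>k\<^sub>f \<approx> \<pi>/(2\<theta>\<^sub>m)\<close> the \<open>\<lambda>\<^sub>+\<close>
  component contributes \<open>sin\<^sup>2(k\<^sub>f \<theta>\<^sub>m) (1 + O(n\<^sup>-\<^sup>1)) = 1 - O(1/n)\<close> and the
  others \<open>O(n\<^sup>-\<^sup>1\<^sup>/\<^sup>2)\<close>. Finally \<open>1 - \<lambda>\<^sub>+ \<asymp> t/n\<^sup>2\<close> gives
  \<open>\<theta>\<^sub>m \<asymp> \<surd>t / n\<close>, hence \<open>k\<^sub>f \<asymp> n / \<surd>t \<asymp> n\<^bsup>(2-\<alpha>)/2\<^esup>\<close>.
\<close>

text \<open>\<open>lift n \<sigma> P Q = d\<^sup>* P + S d\<^sup>* Q\<close>, and \<open>T_op n \<sigma> = d S d\<^sup>*\<close> is the matrix \<open>T\<^sub>\<sigma>\<close>.\<close>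

definition lift :: "nat \<Rightarrow> (nat \<times> nat \<Rightarrow> int) \<Rightarrow> (nat \<Rightarrow> complex) \<Rightarrow> (nat \<Rightarrow> complex) \<Rightarrow> nat \<times> nat \<Rightarrow> complex" where
  "lift n \<sigma> P Q a = (if a \<in> arcs n then of_real (wt n \<sigma> a) * P (snd a) + of_real (wt n \<sigma> (rev_arc a)) * Q (fst a) else 0)"

definition T_op :: "nat \<Rightarrow> (nat \<times> nat \<Rightarrow> int) \<Rightarrow> (nat \<Rightarrow> complex) \<Rightarrow> nat \<Rightarrow> complex" where
  "T_op n \<sigma> Q v = (\<Sum>x\<in>{..n} - {v}. of_real (wt n \<sigma> (x, v) * wt n \<sigma> (v, x)) * Q x)"

lemma wt_square: "n > 0 \<Longrightarrow> wt n \<sigma> a * wt n \<sigma> a = 1 / real n"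
  by (simp add: wt_def)

lemma rev_arc_in_arcs: "a \<in> arcs n \<Longrightarrow> rev_arc a \<in> arcs n"
  by (auto simp: arcs_def rev_arc_def)

lemma rev_arc_involutive[simp]: "rev_arc (rev_arc a) = a"
  by (simp add: rev_arc_def)

lemma arcs_into_eq: "v \<le> n \<Longrightarrow> {a \<in> arcs n. snd a = v} = (\<lambda>x. (x, v)) ` ({..n} - {v})"
  by (auto simp: arcs_def)

lemma sum_arcs_into:
  assumes "v \<le> n"
  shows "(\<Sum>a\<in>{a \<in> arcs n. snd a = v}. g a) = (\<Sum>x\<in>{..n} - {v}. g (x, v))"
  unfolding arcs_into_eq[OF assms] by (subst sum.reindex) (auto simp: inj_on_def)

lemma d_op_lift:
  assumes "n > 0" "v \<le> n"
  shows "d_op n \<sigma> (lift n \<sigma> P Q) v = P v + T_op n \<sigma> Q v"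
proof -
  have "d_op n \<sigma> (lift n \<sigma> P Q) v = (\<Sum>x\<in>{..n} - {v}. of_real (wt n \<sigma> (x,v)) * lift n \<sigma> P Q (x,v))"
    unfolding d_op_def by (rule sum_arcs_into[OF assms(2)])
  also have "\<dots> = (\<Sum>x\<in>{..n} - {v}. of_real (1 / real n) * P v + of_real (wt n \<sigma> (x, v) * wt n \<sigma> (v, x)) * Q x)"
  proof (rule sum.cong[OF refl])
    fix x assume x: "x \<in> {..n} - {v}"
    hence "(x, v) \<in> arcs n" using assms by (auto simp: arcs_def)
    thus "of_real (wt n \<sigma> (x,v)) * lift n \<sigma> P Q (x,v) = of_real (1 / real n) * P v + of_real (wt n \<sigma> (x, v) * wt n \<sigma> (v, x)) * Q x"
      using wt_square[OF assms(1), of \<sigma> "(x,v)"]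
      by (simp add: lift_def rev_arc_def algebra_simps flip: of_real_mult)
  qed
  also have "\<dots> = P v + T_op n \<sigma> Q v"
    using assms by (simp add: sum.distrib T_op_def)
  finally show ?thesis .
qed

lemma U_op_lift:
  assumes "n > 0"
  shows "U_op n \<sigma> (lift n \<sigma> P Q) = lift n \<sigma> (\<lambda>v. - Q v) (\<lambda>v. P v + 2 * T_op n \<sigma> Q v)"
proof
  fix a
  show "U_op n \<sigma> (lift n \<sigma> P Q) a = lift n \<sigma> (\<lambda>v. - Q v) (\<lambda>v. P v + 2 * T_op n \<sigma> Q v) a"
  proof (cases "a \<in> arcs n")
    case True
    have r: "rev_arc a \<in> arcs n" using True by (rule rev_arc_in_arcs)
    have f: "fst a \<le> n" using True by (auto simp: arcs_def)
    show ?thesis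
      using True r d_op_lift[OF assms f, of \<sigma> P Q]
      by (simp add: U_op_def S_op_def d_adj_def lift_def rev_arc_def algebra_simps)
  next
    case False
    thus ?thesis by (simp add: U_op_def S_op_def lift_def)
  qed
qed

lemma d_op_add: "d_op n \<sigma> (\<lambda>a. x a + y a) v = d_op n \<sigma> x v + d_op n \<sigma> y v"
  by (simp add: d_op_def sum.distrib algebra_simps)

lemma d_op_neg: "d_op n \<sigma> (\<lambda>a. - x a) v = - d_op n \<sigma> x v"
  by (simp add: d_op_def sum_negf)

lemma U_op_add: "U_op n \<sigma> (\<lambda>a. x a + y a) = (\<lambda>a. U_op n \<sigma> x a + U_op n \<sigma> y a)"
  by (rule ext) (simp add: U_op_def S_op_def d_adj_def d_op_add algebra_simps)

definition birth_space :: "nat \<Rightarrow> (nat \<times> nat \<Rightarrow> int) \<Rightarrow> (nat \<times> nat \<Rightarrow> complex) \<Rightarrow> bool" where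
  "birth_space n \<sigma> r \<longleftrightarrow> (\<forall>a. a \<notin> arcs n \<longrightarrow> r a = 0) \<and> (\<forall>v\<le>n. d_op n \<sigma> r v = 0) \<and>
     (\<forall>v\<le>n. d_op n \<sigma> (S_op n r) v = 0)"

lemma U_op_birth:
  assumes "birth_space n \<sigma> r"
  shows "U_op n \<sigma> r = (\<lambda>a. - S_op n r a)"
proof
  fix a
  have "\<And>b. d_adj n \<sigma> (d_op n \<sigma> r) b = 0"
    using assms by (auto simp: d_adj_def birth_space_def arcs_def)
  thus "U_op n \<sigma> r a = - S_op n r a"
    by (simp add: U_op_def S_op_def)
qed

lemma S_op_involutive: "(\<forall>a. a \<notin> arcs n \<longrightarrow> r a = 0) \<Longrightarrow> S_op n (S_op n r) = r"
  by (rule ext) (auto simp: S_op_def rev_arc_in_arcs)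

lemma birth_space_neg_S:
  assumes "birth_space n \<sigma> r"
  shows "birth_space n \<sigma> (\<lambda>a. - S_op n r a)"
proof -
  have s: "S_op n (\<lambda>a. - S_op n r a) = (\<lambda>a. - r a)"
    using S_op_involutive[of n r] assms by (auto simp: birth_space_def S_op_def fun_eq_iff rev_arc_in_arcs)
  have "\<forall>a. a \<notin> arcs n \<longrightarrow> - S_op n r a = 0" by (simp add: S_op_def)
  thus ?thesis using assms unfolding birth_space_def s
    by (auto simp: d_op_neg)
qed

lemma lift_cong:
  assumes "\<And>v. v \<le> n \<Longrightarrow> P v = P' v" "\<And>v. v \<le> n \<Longrightarrow> Q v = Q' v"
  shows "lift n \<sigma> P Q = lift n \<sigma> P' Q'"
  by (rule ext) (auto simp: lift_def arcs_def assms)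

lemma psi_decomposition:
  assumes n: "n > 0" and r: "birth_space n \<sigma> r"
    and Y: "\<And>k v. v \<le> n \<Longrightarrow> Y (Suc (Suc k)) v = 2 * T_op n \<sigma> (Y (Suc k)) v - Y k v"
    and u: "unif n = (\<lambda>a. lift n \<sigma> (\<lambda>v. - Y 0 v) (Y 1) a + r a)"
  shows "psi n \<sigma> k = (\<lambda>a. lift n \<sigma> (\<lambda>v. - Y k v) (Y (Suc k)) a + ((\<lambda>x a. - S_op n x a)^^k) r a)
     \<and> birth_space n \<sigma> (((\<lambda>x a. - S_op n x a)^^k) r)"
proof (induction k)
  case 0
  then show ?case using u r by (simp add: psi_def)
next
  case (Suc k)
  let ?R = "((\<lambda>x a. - S_op n x a)^^k) r"
  have IH: "psi n \<sigma> k = (\<lambda>a. lift n \<sigma> (\<lambda>v. - Y k v) (Y (Suc k)) a + ?R a)" "birth_space n \<sigma> ?R"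
    using Suc by auto
  have "psi n \<sigma> (Suc k) = U_op n \<sigma> (psi n \<sigma> k)" by (simp add: psi_def)
  also have "\<dots> = (\<lambda>a. U_op n \<sigma> (lift n \<sigma> (\<lambda>v. - Y k v) (Y (Suc k))) a + U_op n \<sigma> ?R a)"
    unfolding IH(1) by (rule U_op_add)
  also have "U_op n \<sigma> (lift n \<sigma> (\<lambda>v. - Y k v) (Y (Suc k))) = lift n \<sigma> (\<lambda>v. - Y (Suc k) v) (Y (Suc (Suc k)))"
    unfolding U_op_lift[OF n] by (rule lift_cong) (auto simp: Y)
  also have "U_op n \<sigma> ?R = (\<lambda>a. - S_op n ?R a)" by (rule U_op_birth[OF IH(2)])
  finally show ?case using birth_space_neg_S[OF IH(2)] by simp
qed

locale matched_signs =
  fixes n :: nat and \<sigma> :: "nat \<times> nat \<Rightarrow> int" and t :: nat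
  assumes sign: "sign_assignment n \<sigma>" and matching: "is_matching t (marked_edges n \<sigma>)" and npos: "n > 0"
begin

abbreviation "M \<equiv> marked_edges n \<sigma>"
text \<open>Each marked edge carries exactly one arc of sign \<open>-1\<close>; orienting the matching by these
  arcs splits the matched vertices into tails and heads.\<close>

definition "neg_arcs = {a \<in> arcs n. \<sigma> a = -1}"
definition "tails = fst ` neg_arcs"
definition "heads = snd ` neg_arcs"

lemma sign_values: "a \<in> arcs n \<Longrightarrow> \<sigma> a = -1 \<or> \<sigma> a = 1"
  using sign by (auto simp: sign_assignment_def)

lemma neg_sign_rev: "(x,y) \<in> arcs n \<Longrightarrow> \<sigma> (x,y) = -1 \<Longrightarrow> \<sigma> (y,x) = 1"
  using sign by (auto simp: sign_assignment_def rev_arc_def)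

lemma arcs_sym: "(x,y) \<in> arcs n \<Longrightarrow> (y,x) \<in> arcs n"
  by (auto simp: arcs_def)

lemma marked_iff_neg_sign:
  assumes "(x,y) \<in> arcs n"
  shows "{x,y} \<in> M \<longleftrightarrow> \<sigma> (x,y) = -1 \<or> \<sigma> (y,x) = -1"
proof
  assume "{x,y} \<in> M"
  then obtain x' y' where e: "{x,y} = {x',y'}" "(x',y') \<in> arcs n" "\<sigma> (x',y') * \<sigma> (y',x') = -1"
    by (auto simp: marked_edges_def)
  have "\<sigma> (x',y') = -1 \<or> \<sigma> (y',x') = -1"
    using e(3) sign_values[OF e(2)] sign_values[OF arcs_sym[OF e(2)]] by auto
  moreover have "(x = x' \<and> y = y') \<or> (x = y' \<and> y = x')" using e(1) by (auto simp: doubleton_eq_iff)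
  ultimately show "\<sigma> (x,y) = -1 \<or> \<sigma> (y,x) = -1" by auto
next
  assume h: "\<sigma> (x,y) = -1 \<or> \<sigma> (y,x) = -1"
  have "\<sigma> (x,y) * \<sigma> (y,x) = -1"
    using h neg_sign_rev[OF assms] neg_sign_rev[OF arcs_sym[OF assms]] by auto
  thus "{x,y} \<in> M" using assms by (auto simp: marked_edges_def)
qed

lemma marked_disjoint: "e \<in> M \<Longrightarrow> e' \<in> M \<Longrightarrow> e \<noteq> e' \<Longrightarrow> e \<inter> e' = {}"
  using matching by (auto simp: is_matching_def)

lemma neg_arc_marked: "(x,y) \<in> neg_arcs \<Longrightarrow> {x,y} \<in> M"
  using marked_iff_neg_sign by (auto simp: neg_arcs_def)

lemma marked_partner_unique:
  assumes "{x,y} \<in> M" "{x,z} \<in> M" "x \<noteq> y" "x \<noteq> z"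
  shows "y = z"
proof (rule ccontr)
  assume "y \<noteq> z"
  hence "{x,y} \<noteq> {x,z}" by (auto simp: doubleton_eq_iff)
  thus False using marked_disjoint[OF assms(1,2)] by auto
qed

lemma tails_heads_disjoint: "tails \<inter> heads = {}"
proof (rule ccontr)
  assume "tails \<inter> heads \<noteq> {}"
  then obtain x y z where a: "(x,y) \<in> neg_arcs" "(z,x) \<in> neg_arcs" by (auto simp: tails_def heads_def)
  have "{x,y} \<in> M" "{x,z} \<in> M" using neg_arc_marked[OF a(1)] neg_arc_marked[OF a(2)] by (auto simp: insert_commute)
  moreover have "x \<noteq> y" "x \<noteq> z" using a by (auto simp: neg_arcs_def arcs_def)
  ultimately have "y = z" by (rule marked_partner_unique)
  thus False using a neg_sign_rev by (auto simp: neg_arcs_def)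
qed

lemma neg_arc_head_unique: "(x,y) \<in> neg_arcs \<Longrightarrow> (x,y') \<in> neg_arcs \<Longrightarrow> y = y'"
  using marked_partner_unique[of x y y'] neg_arc_marked by (auto simp: neg_arcs_def arcs_def)

lemma neg_arc_tail_unique: "(x,y) \<in> neg_arcs \<Longrightarrow> (x',y) \<in> neg_arcs \<Longrightarrow> x = x'"
  using marked_partner_unique[of y x x'] neg_arc_marked by (auto simp: neg_arcs_def arcs_def insert_commute)

lemma finite_neg_arcs: "finite neg_arcs"
proof -
  have "neg_arcs \<subseteq> {..n} \<times> {..n}" by (auto simp: neg_arcs_def arcs_def)
  thus ?thesis by (rule finite_subset) auto
qed

lemma card_neg_arcs: "card neg_arcs = t"
proof -
  have "bij_betw (\<lambda>a. {fst a, snd a}) neg_arcs M"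
  proof (rule bij_betwI')
    fix a b assume a: "a \<in> neg_arcs" "b \<in> neg_arcs"
    obtain x y x' y' where ab: "a = (x,y)" "b = (x',y')" by fastforce
    show "({fst a, snd a} = {fst b, snd b}) = (a = b)"
    proof
      assume "{fst a, snd a} = {fst b, snd b}"
      hence "(x = x' \<and> y = y') \<or> (x = y' \<and> y = x')" using ab by (auto simp: doubleton_eq_iff)
      thus "a = b" using a ab neg_sign_rev by (auto simp: neg_arcs_def)
    qed simp
  next
    fix a assume "a \<in> neg_arcs" thus "{fst a, snd a} \<in> M" using neg_arc_marked by (cases a) auto
  next
    fix e assume "e \<in> M"
    then obtain x y where e: "e = {x,y}" "(x,y) \<in> arcs n" by (auto simp: marked_edges_def)
    hence "\<sigma> (x,y) = -1 \<or> \<sigma> (y,x) = -1" using marked_iff_neg_sign \<open>e \<in> M\<close> by auto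
    thus "\<exists>a\<in>neg_arcs. e = {fst a, snd a}"
    proof
      assume "\<sigma> (x,y) = -1" thus ?thesis using e by (auto simp: neg_arcs_def intro!: bexI[of _ "(x,y)"])
    next
      assume "\<sigma> (y,x) = -1" thus ?thesis using e arcs_sym[OF e(2)]
        by (auto simp: neg_arcs_def insert_commute intro!: bexI[of _ "(y,x)"])
    qed
  qed
  hence "card neg_arcs = card M" by (rule bij_betw_same_card)
  thus ?thesis using matching by (simp add: is_matching_def)
qed

lemma card_tails: "card tails = t"
proof -
  have "inj_on fst neg_arcs" using neg_arc_head_unique by (auto simp: inj_on_def)
  thus ?thesis unfolding tails_def using card_neg_arcs card_image by metis
qed

lemma card_heads: "card heads = t"
proof -
  have "inj_on snd neg_arcs" using neg_arc_tail_unique by (auto simp: inj_on_def)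
  thus ?thesis unfolding heads_def using card_neg_arcs card_image by metis
qed

lemma tails_subset: "tails \<subseteq> {..n}" by (auto simp: tails_def neg_arcs_def arcs_def)
lemma heads_subset: "heads \<subseteq> {..n}" by (auto simp: heads_def neg_arcs_def arcs_def)

lemma matching_size_bound: "2 * t \<le> n + 1"
proof -
  have "card (tails \<union> heads) \<le> card {..n}" using tails_subset heads_subset by (intro card_mono) auto
  moreover have "card (tails \<union> heads) = 2 * t"
    using tails_heads_disjoint card_tails card_heads finite_subset[OF tails_subset] finite_subset[OF heads_subset]
    by (simp add: card_Un_disjoint)
  ultimately show ?thesis by simp
qed

definition class_fun :: "complex \<Rightarrow> complex \<Rightarrow> complex \<Rightarrow> nat \<Rightarrow> complex" where
  "class_fun a b c v = (if v \<in> tails then a else if v \<in> heads then b else c)"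

lemma sum_class_fun: "(\<Sum>x\<in>{..n}. class_fun a b c x) = of_nat t * a + of_nat t * b + of_nat (n + 1 - 2*t) * c"
proof -
  let ?R = "{..n} - tails - heads"
  have fT: "finite tails" "finite heads" using finite_subset[OF tails_subset] finite_subset[OF heads_subset] by auto
  have split: "{..n} = tails \<union> (heads \<union> ?R)" using tails_subset heads_subset by auto
  have e0: "(\<Sum>x\<in>{..n}. class_fun a b c x) = (\<Sum>x\<in>tails \<union> (heads \<union> ?R). class_fun a b c x)"
    by (subst split, rule refl)
  have "(\<Sum>x\<in>{..n}. class_fun a b c x) = (\<Sum>x\<in>tails. class_fun a b c x) + ((\<Sum>x\<in>heads. class_fun a b c x) + (\<Sum>x\<in>?R. class_fun a b c x))"
  proof -
    have "(\<Sum>x\<in>tails \<union> (heads \<union> ?R). class_fun a b c x) = (\<Sum>x\<in>tails. class_fun a b c x) + (\<Sum>x\<in>heads \<union> ?R. class_fun a b c x)"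
      by (rule sum.union_disjoint) (use fT tails_heads_disjoint in auto)
    moreover have "(\<Sum>x\<in>heads \<union> ?R. class_fun a b c x) = (\<Sum>x\<in>heads. class_fun a b c x) + (\<Sum>x\<in>?R. class_fun a b c x)"
      by (rule sum.union_disjoint) (use fT in auto)
    ultimately show ?thesis using e0 by simp
  qed
  also have "(\<Sum>x\<in>tails. class_fun a b c x) = of_nat t * a" using card_tails by (simp add: class_fun_def)
  also have "(\<Sum>x\<in>heads. class_fun a b c x) = (\<Sum>x\<in>heads. b)"
    using tails_heads_disjoint by (intro sum.cong) (auto simp: class_fun_def)
  also have "\<dots> = of_nat t * b" using card_heads by simp
  also have "(\<Sum>x\<in>?R. class_fun a b c x) = of_nat (card ?R) * c" by (simp add: class_fun_def)
  also have "card ?R = n + 1 - 2*t"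
  proof -
    have e: "?R = {..n} - (tails \<union> heads)" by auto
    have "card ?R = card {..n} - card (tails \<union> heads)" unfolding e
      by (rule card_Diff_subset) (use tails_subset heads_subset fT in auto)
    thus ?thesis using tails_heads_disjoint card_tails card_heads fT by (simp add: card_Un_disjoint)
  qed
  finally show ?thesis by simp
qed

lemma wt_mult_rev:
  assumes "(x,v) \<in> arcs n"
  shows "wt n \<sigma> (x,v) * wt n \<sigma> (v,x) = (if {x,v} \<in> M then -1 else 1) / real n"
proof -
  have "sqrt (real n) * sqrt (real n) = real n" using npos by simp
  thus ?thesis
    using marked_iff_neg_sign[OF assms] neg_sign_rev[OF assms] neg_sign_rev[OF arcs_sym[OF assms]]
    by (auto simp: wt_def)
qed

lemma T_op_eq_marked:
  assumes "v \<le> n"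
  shows "T_op n \<sigma> Q v = ((\<Sum>x\<in>{..n} - {v}. Q x) - 2 * (\<Sum>x\<in>{x\<in>{..n} - {v}. {x,v} \<in> M}. Q x)) / of_nat n"
proof -
  have "T_op n \<sigma> Q v = (\<Sum>x\<in>{..n} - {v}. (if {x,v} \<in> M then -1 else 1) / of_nat n * Q x)"
    unfolding T_op_def
  proof (rule sum.cong[OF refl])
    fix x assume "x \<in> {..n} - {v}"
    hence "(x,v) \<in> arcs n" using assms by (auto simp: arcs_def)
    thus "of_real (wt n \<sigma> (x, v) * wt n \<sigma> (v, x)) * Q x = (if {x,v} \<in> M then -1 else 1) / of_nat n * Q x"
      by (simp add: wt_mult_rev)
  qed
  also have "\<dots> = (\<Sum>x\<in>{..n} - {v}. Q x / of_nat n - (if {x,v} \<in> M then 2 * Q x / of_nat n else 0))"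
    by (intro sum.cong) (auto simp: field_simps)
  also have "\<dots> = (\<Sum>x\<in>{..n} - {v}. Q x) / of_nat n - 2 * (\<Sum>x\<in>{x\<in>{..n} - {v}. {x,v} \<in> M}. Q x) / of_nat n"
    by (simp add: sum_subtractf sum_divide_distrib sum.inter_filter[symmetric] sum_distrib_left)
  finally show ?thesis by (simp add: diff_divide_distrib)
qed

lemma marked_partners_tail:
  assumes "(v,y) \<in> neg_arcs"
  shows "{x\<in>{..n} - {v}. {x,v} \<in> M} = {y}"
proof -
  have vy: "(v,y) \<in> arcs n" "{v,y} \<in> M" using assms neg_arc_marked by (auto simp: neg_arcs_def)
  show ?thesis
  proof (intro equalityI subsetI)
    fix x assume "x \<in> {x\<in>{..n} - {v}. {x,v} \<in> M}"
    hence "{v,x} \<in> M" "v \<noteq> x" by (auto simp: insert_commute)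
    thus "x \<in> {y}" using marked_partner_unique[OF vy(2)] vy(1) by (auto simp: arcs_def)
  next
    fix x assume "x \<in> {y}"
    thus "x \<in> {x\<in>{..n} - {v}. {x,v} \<in> M}" using vy by (auto simp: arcs_def insert_commute)
  qed
qed

lemma marked_partners_head:
  assumes "(y,v) \<in> neg_arcs"
  shows "{x\<in>{..n} - {v}. {x,v} \<in> M} = {y}"
proof -
  have "{y,v} \<in> M" using neg_arc_marked[OF assms] .
  hence vy: "(y,v) \<in> arcs n" "{v,y} \<in> M" using assms by (auto simp: neg_arcs_def insert_commute)
  show ?thesis
  proof (intro equalityI subsetI)
    fix x assume "x \<in> {x\<in>{..n} - {v}. {x,v} \<in> M}"
    hence "{v,x} \<in> M" "v \<noteq> x" by (auto simp: insert_commute)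
    thus "x \<in> {y}" using marked_partner_unique[OF vy(2)] vy(1) by (auto simp: arcs_def)
  next
    fix x assume "x \<in> {y}"
    thus "x \<in> {x\<in>{..n} - {v}. {x,v} \<in> M}" using vy by (auto simp: arcs_def insert_commute)
  qed
qed

lemma marked_partners_free:
  assumes "v \<notin> tails" "v \<notin> heads" "v \<le> n"
  shows "{x\<in>{..n} - {v}. {x,v} \<in> M} = {}"
proof -
  { fix x assume x: "x \<le> n" "x \<noteq> v" "{x,v} \<in> M"
    hence a: "(x,v) \<in> arcs n" using assms by (auto simp: arcs_def)
    hence "\<sigma> (x,v) = -1 \<or> \<sigma> (v,x) = -1" using marked_iff_neg_sign x by auto
    hence False using assms a arcs_sym[OF a]
      by (auto simp: tails_def heads_def neg_arcs_def image_iff) }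
  thus ?thesis by auto
qed

lemma sum_remove_vertex: "v \<le> n \<Longrightarrow> (\<Sum>x\<in>{..n} - {v}. Q x) = (\<Sum>x\<in>{..n}. Q x) - (Q v :: complex)"
proof -
  assume "v \<le> n"
  hence "sum Q {..n} = Q v + sum Q ({..n} - {v})" by (intro sum.remove) auto
  thus ?thesis by simp
qed

definition class_sum :: "complex \<Rightarrow> complex \<Rightarrow> complex \<Rightarrow> complex" where
  "class_sum a b c = of_nat t * a + of_nat t * b + of_nat (n + 1 - 2*t) * c"

lemma T_op_class_fun:
  assumes "v \<le> n"
  shows "T_op n \<sigma> (class_fun a b c) v = class_fun ((class_sum a b c - a - 2*b)/of_nat n) ((class_sum a b c - b - 2*a)/of_nat n) ((class_sum a b c - c)/of_nat n) v"
proof -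
  have base: "(\<Sum>x\<in>{..n} - {v}. class_fun a b c x) = class_sum a b c - class_fun a b c v"
    using sum_remove_vertex[OF assms] sum_class_fun by (simp add: class_sum_def)
  show ?thesis
  proof (cases "v \<in> tails")
    case True
    then obtain y where y: "(v,y) \<in> neg_arcs" by (auto simp: tails_def)
    hence "y \<in> heads" by (force simp: heads_def)
    hence "class_fun a b c y = b" using tails_heads_disjoint by (auto simp: class_fun_def)
    thus ?thesis using True base T_op_eq_marked[OF assms, of "class_fun a b c", unfolded marked_partners_tail[OF y]]
      by (simp add: class_fun_def)
  next
    case nT: False
    show ?thesis
    proof (cases "v \<in> heads")
      case True
      then obtain y where y: "(y,v) \<in> neg_arcs" by (auto simp: heads_def)
      hence "y \<in> tails" by (force simp: tails_def)
      hence "class_fun a b c y = a" by (auto simp: class_fun_def)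
      thus ?thesis using True nT base T_op_eq_marked[OF assms, of "class_fun a b c", unfolded marked_partners_head[OF y]]
        by (simp add: class_fun_def)
    next
      case False
      thus ?thesis using nT base T_op_eq_marked[OF assms, of "class_fun a b c", unfolded marked_partners_free[OF nT False assms]]
        by (simp add: class_fun_def)
    qed
  qed
qed

lemma wt_eq_neg_arcs: "a \<in> arcs n \<Longrightarrow> wt n \<sigma> a = (if a \<in> neg_arcs then -1 else 1) / sqrt (real n)"
  by (auto simp: wt_def neg_arcs_def)

lemma card_neg_arcs_into:
  assumes "v \<le> n"
  shows "card {x\<in>{..n} - {v}. (x,v) \<in> neg_arcs} = (if v \<in> heads then 1 else 0)"
proof (cases "v \<in> heads")
  case True
  then obtain y where y: "(y,v) \<in> neg_arcs" by (auto simp: heads_def)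
  have "{x\<in>{..n} - {v}. (x,v) \<in> neg_arcs} = {y}"
    using y neg_arc_tail_unique[OF y] by (auto simp: neg_arcs_def arcs_def)
  thus ?thesis using True by simp
next
  case False
  hence "{x\<in>{..n} - {v}. (x,v) \<in> neg_arcs} = {}" by (force simp: heads_def)
  thus ?thesis using False by simp
qed

lemma d_op_unif:
  assumes "v \<le> n"
  shows "d_op n \<sigma> (unif n) v = of_real ((if v \<in> heads then real n - 2 else real n) / sqrt (real n) / sqrt (real n * (real n + 1)))"
proof -
  let ?c = "1 / sqrt (real n * (real n + 1))"
  have "d_op n \<sigma> (unif n) v = (\<Sum>x\<in>{..n} - {v}. of_real (wt n \<sigma> (x,v)) * unif n (x,v))"
    unfolding d_op_def by (rule sum_arcs_into[OF assms])
  also have "\<dots> = of_real (\<Sum>x\<in>{..n} - {v}. (1 / sqrt (real n) - (if (x,v) \<in> neg_arcs then 2 / sqrt (real n) else 0)) * ?c)"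
    unfolding of_real_sum
  proof (rule sum.cong[OF refl])
    fix x assume "x \<in> {..n} - {v}"
    hence a: "(x,v) \<in> arcs n" using assms by (auto simp: arcs_def)
    show "of_real (wt n \<sigma> (x,v)) * unif n (x,v) = of_real ((1 / sqrt (real n) - (if (x,v) \<in> neg_arcs then 2 / sqrt (real n) else 0)) * ?c)"
      using a by (simp add: wt_eq_neg_arcs unif_def flip: of_real_mult)
  qed
  also have "(\<Sum>x\<in>{..n} - {v}. (1 / sqrt (real n) - (if (x,v) \<in> neg_arcs then 2 / sqrt (real n) else 0)) * ?c)
     = (real n / sqrt (real n) - real (card {x\<in>{..n} - {v}. (x,v) \<in> neg_arcs}) * (2 / sqrt (real n))) * ?c"
  proof -
    let ?S = "{..n} - {v}"
    have f1: "(\<Sum>x\<in>?S. (if (x,v) \<in> neg_arcs then 2 / sqrt (real n) else 0)) = (\<Sum>x\<in>{x\<in>?S. (x,v) \<in> neg_arcs}. 2 / sqrt (real n))"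
      by (rule sum.inter_filter[symmetric]) simp
    have f2: "(\<Sum>x\<in>?S. (1 / sqrt (real n) - (if (x,v) \<in> neg_arcs then 2 / sqrt (real n) else 0)))
       = real n / sqrt (real n) - real (card {x\<in>?S. (x,v) \<in> neg_arcs}) * (2 / sqrt (real n))"
      unfolding sum_subtractf f1 using assms by simp
    show ?thesis unfolding sum_distrib_right[symmetric] f2 ..
  qed
  also have "\<dots> = (if v \<in> heads then real n - 2 else real n) / sqrt (real n) / sqrt (real n * (real n + 1))"
    unfolding card_neg_arcs_into[OF assms] using npos by (simp add: diff_divide_distrib)
  finally show ?thesis .
qed

lemma marked_arcs_eq: "{a \<in> arcs n. {fst a, snd a} \<in> M} = neg_arcs \<union> rev_arc ` neg_arcs"
proof (intro equalityI subsetI)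
  fix a assume "a \<in> {a \<in> arcs n. {fst a, snd a} \<in> M}"
  then obtain x y where a: "a = (x,y)" "(x,y) \<in> arcs n" "{x,y} \<in> M" by (cases a) auto
  hence "\<sigma> (x,y) = -1 \<or> \<sigma> (y,x) = -1" using marked_iff_neg_sign by auto
  thus "a \<in> neg_arcs \<union> rev_arc ` neg_arcs"
    using a arcs_sym[OF a(2)] by (auto simp: neg_arcs_def image_iff rev_arc_def)
next
  fix a assume "a \<in> neg_arcs \<union> rev_arc ` neg_arcs"
  thus "a \<in> {a \<in> arcs n. {fst a, snd a} \<in> M}"
    using neg_arc_marked arcs_sym by (auto simp: neg_arcs_def rev_arc_in_arcs rev_arc_def insert_commute)
qed

lemma neg_arcs_rev_disjoint: "neg_arcs \<inter> rev_arc ` neg_arcs = {}"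
  using neg_sign_rev by (auto simp: neg_arcs_def rev_arc_def)

lemma success_prob_split:
  assumes "\<And>a. a \<in> neg_arcs \<Longrightarrow> cmod (psi n \<sigma> k a) = X"
    and "\<And>a. a \<in> neg_arcs \<Longrightarrow> cmod (psi n \<sigma> k (rev_arc a)) = Y"
  shows "success_prob n \<sigma> k = real t * X\<^sup>2 + real t * Y\<^sup>2"
proof -
  have inj: "inj_on rev_arc neg_arcs" by (metis inj_on_def rev_arc_involutive)
  have "success_prob n \<sigma> k = (\<Sum>a\<in>neg_arcs. (cmod (psi n \<sigma> k a))\<^sup>2) + (\<Sum>a\<in>rev_arc ` neg_arcs. (cmod (psi n \<sigma> k a))\<^sup>2)"
    unfolding success_prob_def marked_arcs_eq
    by (rule sum.union_disjoint) (use finite_neg_arcs neg_arcs_rev_disjoint in auto)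
  also have "(\<Sum>a\<in>rev_arc ` neg_arcs. (cmod (psi n \<sigma> k a))\<^sup>2) = (\<Sum>a\<in>neg_arcs. (cmod (psi n \<sigma> k (rev_arc a)))\<^sup>2)"
    by (rule sum.reindex[OF inj, unfolded comp_def])
  finally show ?thesis using assms card_neg_arcs by simp
qed

end

text \<open>The initial values encode \<open>Y\<^sub>0 = -Y\<^sub>1\<close>, which is forced by the arc-reversal symmetry of
  the uniform state.\<close>

fun cheb :: "real \<Rightarrow> nat \<Rightarrow> real" where
  "cheb l 0 = -1"
| "cheb l (Suc 0) = 1"
| "cheb l (Suc (Suc k)) = 2 * l * cheb l (Suc k) - cheb l k"

text \<open>\<open>\<mu>\<^sub>\<plusminus>\<close> are the roots of \<open>\<mu>\<^sup>2 - (n - 3) \<mu> + 4t - 3n\<close>; the class function with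
  values \<open>(a\<^sub>\<plusminus>, a\<^sub>\<plusminus>, 2t)\<close> is a \<open>T\<^sub>\<sigma>\<close>-eigenvector for \<open>\<lambda>\<^sub>\<plusminus> = \<mu>\<^sub>\<plusminus>/n\<close>, and
  \<open>(1, -1, 0)\<close> one for \<open>1/n\<close>. The \<open>\<beta>\<close>'s are the coordinates of \<open>d u\<close> in this eigenbasis
  (\<open>d u\<close> takes the value \<open>du_free\<close> on tails and unmatched vertices), the \<open>al\<close>'s
  those of \<open>Y\<^sub>1\<close>.\<close>

definition "disc_root n t = sqrt ((real n + 3)\<^sup>2 - 16 * real t)"
definition "mu_pos n t = (real n - 3 + disc_root n t) / 2"
definition "mu_neg n t = (real n - 3 - disc_root n t) / 2"
definition "a_pos n t = mu_pos n t - real n + 2 * real t"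
definition "a_neg n t = mu_neg n t - real n + 2 * real t"
definition "lam_pos n t = mu_pos n t / real n"
definition "lam_neg n t = mu_neg n t / real n"
definition "lam_alt n = 1 / real n"
definition "unif_amp n = 1 / sqrt (real n * (real n + 1))"
definition "wt_amp n = 1 / sqrt (real n)"
definition "du_free n = real n * wt_amp n * unif_amp n"
definition "du_mean n = (real n - 1) * wt_amp n * unif_amp n"
definition "beta_alt n = wt_amp n * unif_amp n"
definition "beta_pos n t = (2 * real t * du_mean n - a_neg n t * du_free n) / (2 * real t * disc_root n t)"
definition "beta_neg n t = (a_pos n t * du_free n - 2 * real t * du_mean n) / (2 * real t * disc_root n t)"
definition "al_alt n = beta_alt n / (1 + lam_alt n)"
definition "al_pos n t = beta_pos n t / (1 + lam_pos n t)"
definition "al_neg n t = beta_neg n t / (1 + lam_neg n t)"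
definition "y_tail n t k = al_alt n * cheb (lam_alt n) k + al_pos n t * a_pos n t * cheb (lam_pos n t) k + al_neg n t * a_neg n t * cheb (lam_neg n t) k"
definition "y_head n t k = - al_alt n * cheb (lam_alt n) k + al_pos n t * a_pos n t * cheb (lam_pos n t) k + al_neg n t * a_neg n t * cheb (lam_neg n t) k"
definition "birth_amp n = unif_amp n - 2 * wt_amp n * al_alt n"

lemma disc_root_facts:
  assumes "2 * t \<le> n + 1"
  shows "(real n + 3)\<^sup>2 - 16 * real t \<ge> (real n - 1)\<^sup>2" "disc_root n t \<ge> \<bar>real n - 1\<bar>"
    "(disc_root n t)\<^sup>2 = (real n + 3)\<^sup>2 - 16 * real t" "disc_root n t \<le> real n + 3"
proof -
  have "2 * real t \<le> real n + 1" using assms by linarith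
  thus a: "(real n + 3)\<^sup>2 - 16 * real t \<ge> (real n - 1)\<^sup>2" by (simp add: power2_eq_square algebra_simps)
  hence "sqrt ((real n - 1)\<^sup>2) \<le> disc_root n t" unfolding disc_root_def by (rule real_sqrt_le_mono)
  thus "disc_root n t \<ge> \<bar>real n - 1\<bar>" by simp
  have "0 \<le> (real n - 1)\<^sup>2" by simp
  hence "0 \<le> (real n + 3)\<^sup>2 - 16 * real t" using a by linarith
  thus "(disc_root n t)\<^sup>2 = (real n + 3)\<^sup>2 - 16 * real t" unfolding disc_root_def by simp
  have "0 \<le> (real n - 1)\<^sup>2" by simp
  show "disc_root n t \<le> real n + 3" unfolding disc_root_def
    by (rule real_le_lsqrt) (use a \<open>0 \<le> (real n - 1)\<^sup>2\<close> in auto)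
qed

lemma mu_quadratic:
  assumes "2 * t \<le> n + 1" and "mu = (real n - 3 + s * disc_root n t) / 2" and "s = 1 \<or> s = -1"
  shows "mu\<^sup>2 - (real n - 3) * mu + 4 * real t - 3 * real n = 0"
proof -
  have "s\<^sup>2 = 1" using assms(3) by auto
  hence S: "(s * disc_root n t)\<^sup>2 = (real n + 3)\<^sup>2 - 16 * real t" using disc_root_facts(3)[OF assms(1)]
    by (simp add: power_mult_distrib)
  have "mu\<^sup>2 - (real n - 3) * mu + 4 * real t - 3 * real n = ((s * disc_root n t)\<^sup>2 - ((real n + 3)\<^sup>2 - 16 * real t)) / 4"
    unfolding assms(2) by (simp add: power2_eq_square field_simps)
  thus ?thesis using S by simp
qed

lemma mu_pos_quadratic: "2 * t \<le> n + 1 \<Longrightarrow> (mu_pos n t)\<^sup>2 - (real n - 3) * mu_pos n t + 4 * real t - 3 * real n = 0"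
  by (rule mu_quadratic[where s=1]) (auto simp: mu_pos_def)
lemma mu_neg_quadratic: "2 * t \<le> n + 1 \<Longrightarrow> (mu_neg n t)\<^sup>2 - (real n - 3) * mu_neg n t + 4 * real t - 3 * real n = 0"
  by (rule mu_quadratic[where s="-1"]) (auto simp: mu_neg_def)

lemma eigen_equations:
  assumes q: "mu\<^sup>2 - (real n - 3) * mu + 4 * real t - 3 * real n = 0" and a: "a = mu - real n + 2 * real t"
  shows "2 * real t * a + (real n + 1 - 2 * real t) * (2 * real t) - 3 * a = mu * a"
    "2 * real t * a + (real n + 1 - 2 * real t) * (2 * real t) - 2 * real t = mu * (2 * real t)"
  using q unfolding a by (simp_all add: power2_eq_square algebra_simps)

context matched_signs
begin

lemma T_op_class_fun_real:
  assumes "v \<le> n"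
  shows "T_op n \<sigma> (class_fun (of_real a) (of_real b) (of_real c)) v =
    class_fun (of_real ((real t * a + real t * b + real (n + 1 - 2*t) * c - a - 2*b) / real n))
       (of_real ((real t * a + real t * b + real (n + 1 - 2*t) * c - b - 2*a) / real n))
       (of_real ((real t * a + real t * b + real (n + 1 - 2*t) * c - c) / real n)) v"
  unfolding T_op_class_fun[OF assms] by (simp add: class_sum_def)

lemma T_op_linear: "T_op n \<sigma> (\<lambda>v. x * A v + y * B v + z * C v) w = x * T_op n \<sigma> A w + y * T_op n \<sigma> B w + z * T_op n \<sigma> C w"
  unfolding T_op_def by (simp add: sum.distrib sum_distrib_left algebra_simps)

definition "eig_alt = class_fun 1 (-1) 0"
definition "eig_pos = class_fun (of_real (a_pos n t)) (of_real (a_pos n t)) (of_real (2 * real t))"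
definition "eig_neg = class_fun (of_real (a_neg n t)) (of_real (a_neg n t)) (of_real (2 * real t))"

lemma free_count_real: "real (n + 1 - 2*t) = real n + 1 - 2 * real t"
  using matching_size_bound by simp

lemma T_op_eig_alt: "v \<le> n \<Longrightarrow> T_op n \<sigma> eig_alt v = of_real (lam_alt n) * eig_alt v"
proof -
  assume v: "v \<le> n"
  have "eig_alt = class_fun (of_real 1) (of_real (-1)) (of_real 0)" by (simp add: eig_alt_def)
  hence "T_op n \<sigma> eig_alt v = class_fun (of_real (1 / real n)) (of_real (- 1 / real n)) (of_real 0) v"
    using T_op_class_fun_real[OF v, of 1 "-1" 0] by simp
  thus ?thesis by (simp add: class_fun_def eig_alt_def lam_alt_def)
qed

lemma T_op_eig:
  assumes v: "v \<le> n" and q: "mu\<^sup>2 - (real n - 3) * mu + 4 * real t - 3 * real n = 0" and a: "a = mu - real n + 2 * real t"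
  shows "T_op n \<sigma> (class_fun (of_real a) (of_real a) (of_real (2 * real t))) v = of_real (mu / real n) * class_fun (of_real a) (of_real a) (of_real (2 * real t)) v"
proof -
  note e = eigen_equations[OF q a]
  have e1: "(real t * a + real t * a + (real n + 1 - 2 * real t) * (2 * real t) - a - 2 * a) / real n = mu / real n * a"
    using e(1) by (simp add: field_simps)
  have e3: "(real t * a + real t * a + (real n + 1 - 2 * real t) * (2 * real t) - 2 * real t) / real n = mu / real n * (2 * real t)"
    using e(2) by (simp add: field_simps)
  show ?thesis unfolding T_op_class_fun_real[OF v] free_count_real e1 e3 by (simp add: class_fun_def)
qed

lemma T_op_eig_pos: "v \<le> n \<Longrightarrow> T_op n \<sigma> eig_pos v = of_real (lam_pos n t) * eig_pos v"
  unfolding eig_pos_def lam_pos_def by (rule T_op_eig[OF _ mu_pos_quadratic[OF matching_size_bound]]) (simp_all add: a_pos_def)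

lemma T_op_eig_neg: "v \<le> n \<Longrightarrow> T_op n \<sigma> eig_neg v = of_real (lam_neg n t) * eig_neg v"
  unfolding eig_neg_def lam_neg_def by (rule T_op_eig[OF _ mu_neg_quadratic[OF matching_size_bound]]) (simp_all add: a_neg_def)

definition "Yseq k v = of_real (al_alt n * cheb (lam_alt n) k) * eig_alt v + of_real (al_pos n t * cheb (lam_pos n t) k) * eig_pos v
   + of_real (al_neg n t * cheb (lam_neg n t) k) * eig_neg v"

lemma Yseq_rec: "v \<le> n \<Longrightarrow> Yseq (Suc (Suc k)) v = 2 * T_op n \<sigma> (Yseq (Suc k)) v - Yseq k v"
proof -
  assume v: "v \<le> n"
  have "T_op n \<sigma> (Yseq (Suc k)) v = of_real (al_alt n * cheb (lam_alt n) (Suc k)) * T_op n \<sigma> eig_alt v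
     + of_real (al_pos n t * cheb (lam_pos n t) (Suc k)) * T_op n \<sigma> eig_pos v + of_real (al_neg n t * cheb (lam_neg n t) (Suc k)) * T_op n \<sigma> eig_neg v"
    unfolding Yseq_def by (rule T_op_linear)
  thus ?thesis unfolding T_op_eig_alt[OF v] T_op_eig_pos[OF v] T_op_eig_neg[OF v] Yseq_def
    by (simp add: algebra_simps)
qed

lemma Yseq_0: "Yseq 0 v = - Yseq 1 v"
  by (simp add: Yseq_def)

end

locale matched_signs_large = matched_signs +
  assumes t1: "t \<ge> 1" and n4: "n \<ge> 4"
begin

lemma disc_root_pos: "disc_root n t \<ge> real n - 1" "disc_root n t > 0"
  using disc_root_facts(2)[OF matching_size_bound] n4 by auto

lemma a_pos_minus_a_neg: "a_pos n t - a_neg n t = disc_root n t"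
  by (simp add: a_pos_def a_neg_def mu_pos_def mu_neg_def field_simps)

lemma one_plus_lam_nonzero: "1 + lam_alt n \<noteq> 0" "1 + lam_pos n t \<noteq> 0" "1 + lam_neg n t \<noteq> 0"
proof -
  have "lam_alt n > 0" using n4 by (simp add: lam_alt_def)
  thus "1 + lam_alt n \<noteq> 0" by linarith
  have "mu_pos n t > 0" using disc_root_pos n4 by (simp add: mu_pos_def)
  hence "lam_pos n t > 0" using n4 unfolding lam_pos_def by simp
  thus "1 + lam_pos n t \<noteq> 0" by linarith
  have "mu_neg n t \<ge> -3" using disc_root_facts(4)[OF matching_size_bound] by (simp add: mu_neg_def)
  hence "mu_neg n t / real n > -1" using n4 by (simp add: field_simps)
  thus "1 + lam_neg n t \<noteq> 0" unfolding lam_neg_def by linarith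
qed

lemma Yseq_1: "Yseq 1 v = of_real (al_alt n) * eig_alt v + of_real (al_pos n t) * eig_pos v + of_real (al_neg n t) * eig_neg v"
  by (simp add: Yseq_def)

lemma Yseq_1_plus_T_op:
  assumes v: "v \<le> n"
  shows "Yseq 1 v + T_op n \<sigma> (Yseq 1) v = of_real (beta_alt n) * eig_alt v + of_real (beta_pos n t) * eig_pos v + of_real (beta_neg n t) * eig_neg v"
proof -
  have "T_op n \<sigma> (Yseq 1) v = of_real (al_alt n) * T_op n \<sigma> eig_alt v + of_real (al_pos n t) * T_op n \<sigma> eig_pos v + of_real (al_neg n t) * T_op n \<sigma> eig_neg v"
    unfolding Yseq_1 by (rule T_op_linear)
  also have "\<dots> = of_real (al_alt n * lam_alt n) * eig_alt v + of_real (al_pos n t * lam_pos n t) * eig_pos v + of_real (al_neg n t * lam_neg n t) * eig_neg v"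
    unfolding T_op_eig_alt[OF v] T_op_eig_pos[OF v] T_op_eig_neg[OF v] by simp
  finally have "Yseq 1 v + T_op n \<sigma> (Yseq 1) v = of_real (al_alt n * (1 + lam_alt n)) * eig_alt v + of_real (al_pos n t * (1 + lam_pos n t)) * eig_pos v
     + of_real (al_neg n t * (1 + lam_neg n t)) * eig_neg v"
    unfolding Yseq_1 by (simp add: algebra_simps)
  moreover have "al_alt n * (1 + lam_alt n) = beta_alt n" "al_pos n t * (1 + lam_pos n t) = beta_pos n t" "al_neg n t * (1 + lam_neg n t) = beta_neg n t"
    using one_plus_lam_nonzero by (simp_all add: al_alt_def al_pos_def al_neg_def)
  ultimately show ?thesis by simp
qed

lemma beta_sums:
  "beta_pos n t * a_pos n t + beta_neg n t * a_neg n t = du_mean n"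
  "2 * real t * beta_pos n t + 2 * real t * beta_neg n t = du_free n"
proof -
  have R: "disc_root n t \<noteq> 0" using disc_root_pos by simp
  have tt: "real t \<noteq> 0" using t1 by simp
  have "beta_pos n t * a_pos n t + beta_neg n t * a_neg n t = du_mean n * (a_pos n t - a_neg n t) / disc_root n t"
    unfolding beta_pos_def beta_neg_def using R tt by (simp add: field_simps)
  thus "beta_pos n t * a_pos n t + beta_neg n t * a_neg n t = du_mean n" using a_pos_minus_a_neg R by simp
  have "2 * real t * beta_pos n t + 2 * real t * beta_neg n t = du_free n * (a_pos n t - a_neg n t) / disc_root n t"
    unfolding beta_pos_def beta_neg_def using R tt by (simp add: field_simps)
  thus "2 * real t * beta_pos n t + 2 * real t * beta_neg n t = du_free n" using a_pos_minus_a_neg R by simp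
qed

lemma d_op_unif_eigen:
  assumes v: "v \<le> n"
  shows "of_real (beta_alt n) * eig_alt v + of_real (beta_pos n t) * eig_pos v + of_real (beta_neg n t) * eig_neg v = d_op n \<sigma> (unif n) v"
proof -
  have pc: "wt_amp n * unif_amp n = 1 / sqrt (real n) / sqrt (real n * (real n + 1))" by (simp add: wt_amp_def unif_amp_def)
  have A: "beta_alt n + du_mean n = real n * (wt_amp n * unif_amp n)" by (simp add: beta_alt_def du_mean_def algebra_simps)
  have B: "- beta_alt n + du_mean n = (real n - 2) * (wt_amp n * unif_amp n)" by (simp add: beta_alt_def du_mean_def algebra_simps)
  have C: "du_free n = real n * (wt_amp n * unif_amp n)" by (simp add: du_free_def)
  have T: "beta_alt n + (beta_pos n t * a_pos n t + beta_neg n t * a_neg n t) = real n / sqrt (real n) / sqrt (real n * (real n + 1))"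
    unfolding beta_sums A pc by simp
  have H: "- beta_alt n + (beta_pos n t * a_pos n t + beta_neg n t * a_neg n t) = (real n - 2) / sqrt (real n) / sqrt (real n * (real n + 1))"
    unfolding beta_sums B pc by simp
  have F: "2 * real t * beta_pos n t + 2 * real t * beta_neg n t = real n / sqrt (real n) / sqrt (real n * (real n + 1))"
    unfolding beta_sums C pc by simp
  show ?thesis
    unfolding d_op_unif[OF v] eig_alt_def eig_pos_def eig_neg_def class_fun_def
    using T H F tails_heads_disjoint
    by (auto simp flip: of_real_mult of_real_add of_real_minus of_real_diff simp: algebra_simps)
qed

definition "birth_init = (\<lambda>a. unif n a - lift n \<sigma> (\<lambda>v. - Yseq 0 v) (Yseq 1) a)"

lemma unif_decomposition: "unif n = (\<lambda>a. lift n \<sigma> (\<lambda>v. - Yseq 0 v) (Yseq 1) a + birth_init a)"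
  by (simp add: birth_init_def)

lemma lift_Yseq_rev: "lift n \<sigma> (\<lambda>v. - Yseq 0 v) (Yseq 1) (rev_arc a) = lift n \<sigma> (\<lambda>v. - Yseq 0 v) (Yseq 1) a"
  by (cases a) (auto simp: lift_def Yseq_0 rev_arc_def arcs_def)

lemma birth_space_birth_init: "birth_space n \<sigma> birth_init"
proof -
  have supp: "\<forall>a. a \<notin> arcs n \<longrightarrow> birth_init a = 0" by (simp add: birth_init_def unif_def lift_def)
  have S: "S_op n birth_init = birth_init"
  proof
    fix a show "S_op n birth_init a = birth_init a"
    proof (cases "a \<in> arcs n")
      case True
      hence "unif n (rev_arc a) = unif n a" using rev_arc_in_arcs by (simp add: unif_def)
      thus ?thesis using True unfolding S_op_def birth_init_def lift_Yseq_rev by simp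
    next
      case False thus ?thesis using supp by (cases a) (auto simp: S_op_def)
    qed
  qed
  have d: "\<forall>v\<le>n. d_op n \<sigma> birth_init v = 0"
  proof (intro allI impI)
    fix v assume v: "v \<le> n"
    have "d_op n \<sigma> birth_init v = d_op n \<sigma> (unif n) v - d_op n \<sigma> (lift n \<sigma> (\<lambda>v. - Yseq 0 v) (Yseq 1)) v"
      unfolding birth_init_def using d_op_add[of n \<sigma> "unif n" "\<lambda>a. - lift n \<sigma> (\<lambda>v. - Yseq 0 v) (Yseq 1) a" v]
      by (simp add: d_op_neg)
    also have "\<dots> = 0" unfolding d_op_lift[OF npos v] Yseq_0 using Yseq_1_plus_T_op[OF v] d_op_unif_eigen[OF v] by simp
    finally show "d_op n \<sigma> birth_init v = 0" .
  qed
  show ?thesis unfolding birth_space_def S using supp d by simp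
qed

definition "birth_part k = ((\<lambda>x a. - S_op n x a)^^k) birth_init"

lemma psi_eq: "psi n \<sigma> k = (\<lambda>a. lift n \<sigma> (\<lambda>v. - Yseq k v) (Yseq (Suc k)) a + birth_part k a)"
  using psi_decomposition[OF npos birth_space_birth_init Yseq_rec unif_decomposition] by (simp add: birth_part_def)

lemma neg_arc_tail_head: "(x,y) \<in> neg_arcs \<Longrightarrow> x \<in> tails \<and> y \<in> heads \<and> y \<notin> tails \<and> x \<notin> heads"
  using tails_heads_disjoint by (force simp: tails_def heads_def)

lemma Yseq_tail: "x \<in> tails \<Longrightarrow> Yseq k x = of_real (y_tail n t k)"
  by (simp add: Yseq_def eig_alt_def eig_pos_def eig_neg_def class_fun_def y_tail_def algebra_simps)

lemma Yseq_head: "y \<in> heads \<Longrightarrow> y \<notin> tails \<Longrightarrow> Yseq k y = of_real (y_head n t k)"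
  by (simp add: Yseq_def eig_alt_def eig_pos_def eig_neg_def class_fun_def y_head_def algebra_simps)

lemma wt_neg_arc: "(x,y) \<in> neg_arcs \<Longrightarrow> wt n \<sigma> (x,y) = - wt_amp n \<and> wt n \<sigma> (y,x) = wt_amp n"
  using neg_sign_rev by (auto simp: neg_arcs_def wt_def wt_amp_def)

lemma lift_neg_arc:
  assumes a: "(x,y) \<in> neg_arcs"
  shows "lift n \<sigma> P Q (x,y) = - of_real (wt_amp n) * P y + of_real (wt_amp n) * Q x"
    "lift n \<sigma> P Q (y,x) = of_real (wt_amp n) * P x - of_real (wt_amp n) * Q y"
  using a wt_neg_arc[OF a] arcs_sym[of x y] by (auto simp: lift_def neg_arcs_def rev_arc_def)

lemma birth_init_neg_arc:
  assumes a: "(x,y) \<in> neg_arcs"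
  shows "birth_init (x,y) = of_real (birth_amp n)" "birth_init (y,x) = of_real (birth_amp n)"
proof -
  have xy: "x \<in> tails" "y \<in> heads" "y \<notin> tails" using neg_arc_tail_head[OF a] by auto
  have arc: "(x,y) \<in> arcs n" "(y,x) \<in> arcs n" using a arcs_sym by (auto simp: neg_arcs_def)
  have u: "unif n (x,y) = of_real (unif_amp n)" "unif n (y,x) = of_real (unif_amp n)" using arc by (auto simp: unif_def unif_amp_def)
  have d: "y_tail n t 1 - y_head n t 1 = 2 * al_alt n" by (simp add: y_tail_def y_head_def)
  show "birth_init (x,y) = of_real (birth_amp n)"
    unfolding birth_init_def lift_neg_arc[OF a] u Yseq_0 Yseq_tail[OF xy(1)] Yseq_head[OF xy(2,3)] birth_amp_def
    using d by (simp flip: of_real_mult of_real_add of_real_minus of_real_diff add: algebra_simps)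
  show "birth_init (y,x) = of_real (birth_amp n)"
    unfolding birth_init_def lift_neg_arc[OF a] u Yseq_0 Yseq_tail[OF xy(1)] Yseq_head[OF xy(2,3)] birth_amp_def
    using d by (simp flip: of_real_mult of_real_add of_real_minus of_real_diff add: algebra_simps)
qed

lemma birth_part_neg_arc:
  "\<forall>x y. (x,y) \<in> neg_arcs \<longrightarrow> birth_part k (x,y) = of_real ((-1)^k * birth_amp n) \<and> birth_part k (y,x) = of_real ((-1)^k * birth_amp n)"
proof (induction k)
  case 0 thus ?case using birth_init_neg_arc by (simp add: birth_part_def)
next
  case (Suc k)
  show ?case
  proof (intro allI impI)
    fix x y assume a: "(x,y) \<in> neg_arcs"
    have arc: "(x,y) \<in> arcs n" "(y,x) \<in> arcs n" using a arcs_sym by (auto simp: neg_arcs_def)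
    have "birth_part (Suc k) = (\<lambda>a. - S_op n (birth_part k) a)" by (simp add: birth_part_def)
    thus "birth_part (Suc k) (x,y) = of_real ((-1)^Suc k * birth_amp n) \<and> birth_part (Suc k) (y,x) = of_real ((-1)^Suc k * birth_amp n)"
      using Suc[rule_format, OF a] arc by (simp add: S_op_def rev_arc_def)
  qed
qed

lemma psi_neg_arc:
  assumes a: "(x,y) \<in> neg_arcs"
  shows "psi n \<sigma> k (x,y) = of_real (wt_amp n * (y_head n t k + y_tail n t (Suc k)) + (-1)^k * birth_amp n)"
    "psi n \<sigma> k (y,x) = of_real (- wt_amp n * (y_tail n t k + y_head n t (Suc k)) + (-1)^k * birth_amp n)"
proof -
  have xy: "x \<in> tails" "y \<in> heads" "y \<notin> tails" using neg_arc_tail_head[OF a] by auto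
  show "psi n \<sigma> k (x,y) = of_real (wt_amp n * (y_head n t k + y_tail n t (Suc k)) + (-1)^k * birth_amp n)"
    unfolding psi_eq lift_neg_arc[OF a] Yseq_tail[OF xy(1)] Yseq_head[OF xy(2,3)] using birth_part_neg_arc[of k] a
    by (simp add: algebra_simps)
  show "psi n \<sigma> k (y,x) = of_real (- wt_amp n * (y_tail n t k + y_head n t (Suc k)) + (-1)^k * birth_amp n)"
    unfolding psi_eq lift_neg_arc[OF a] Yseq_tail[OF xy(1)] Yseq_head[OF xy(2,3)] using birth_part_neg_arc[of k] a
    by (simp add: algebra_simps)
qed

lemma success_prob_formula:
  "success_prob n \<sigma> k = real t * (wt_amp n * (y_head n t k + y_tail n t (Suc k)) + (-1)^k * birth_amp n)\<^sup>2
     + real t * (- wt_amp n * (y_tail n t k + y_head n t (Suc k)) + (-1)^k * birth_amp n)\<^sup>2"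
proof -
  have "success_prob n \<sigma> k = real t * \<bar>wt_amp n * (y_head n t k + y_tail n t (Suc k)) + (-1)^k * birth_amp n\<bar>\<^sup>2
     + real t * \<bar>- wt_amp n * (y_tail n t k + y_head n t (Suc k)) + (-1)^k * birth_amp n\<bar>\<^sup>2"
  proof (rule success_prob_split)
    fix a assume "a \<in> neg_arcs"
    then obtain x y where a: "a = (x,y)" "(x,y) \<in> neg_arcs" by (cases a) auto
    show "cmod (psi n \<sigma> k a) = \<bar>wt_amp n * (y_head n t k + y_tail n t (Suc k)) + (-1)^k * birth_amp n\<bar>"
      unfolding a psi_neg_arc[OF a(2)] by (rule norm_of_real)
    show "cmod (psi n \<sigma> k (rev_arc a)) = \<bar>- wt_amp n * (y_tail n t k + y_head n t (Suc k)) + (-1)^k * birth_amp n\<bar>"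
    proof -
      have "rev_arc a = (y,x)" by (simp add: a rev_arc_def)
      thus ?thesis by (simp only: psi_neg_arc(2)[OF a(2)] norm_of_real)
    qed
  qed
  thus ?thesis by simp
qed

end

lemma sin_mult_rec: "sin (real (Suc (Suc k)) * x) = 2 * cos x * sin (real (Suc k) * x) - sin (real k * x)"
proof -
  have "sin (real (Suc k) * x + x) + sin (real (Suc k) * x - x) = 2 * cos x * sin (real (Suc k) * x)"
    by (simp add: sin_add sin_diff)
  moreover have "real (Suc (Suc k)) * x = real (Suc k) * x + x" "real k * x = real (Suc k) * x - x"
    by (simp_all add: algebra_simps)
  ultimately show ?thesis by simp
qed

lemma cos_mult_rec: "cos (real (Suc (Suc k)) * x) = 2 * cos x * cos (real (Suc k) * x) - cos (real k * x)"
proof -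
  have "cos (real (Suc k) * x + x) + cos (real (Suc k) * x - x) = 2 * cos x * cos (real (Suc k) * x)"
    by (simp add: cos_add cos_diff)
  moreover have "real (Suc (Suc k)) * x = real (Suc k) * x + x" "real k * x = real (Suc k) * x - x"
    by (simp_all add: algebra_simps)
  ultimately show ?thesis by simp
qed

lemma cos_sin_sq_mult: "cos x * (cos x * y) + sin x * (sin x * y) = (y::real)"
proof -
  have h: "cos x * cos x + sin x * sin x = 1" by (rule sin_cos_squared_add3)
  have "(cos x * cos x + sin x * sin x) * y = y" unfolding h by simp
  thus ?thesis by (simp only: distrib_right mult.assoc)
qed

lemma cheb_closed_form:
  assumes "sin x \<noteq> 0"
  shows "cheb (cos x) k = sin (real k * x) * (1 + cos x) / sin x - cos (real k * x)"
proof (induction "cos x" k rule: cheb.induct)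
  case 1 thus ?case by simp
next
  case 2 thus ?case using assms by simp
next
  case (3 k)
  show ?case unfolding cheb.simps 3 sin_mult_rec[of k x] cos_mult_rec[of k x]
    using assms by (simp add: field_simps)
qed

lemma cheb_Suc_minus:
  assumes "sin x \<noteq> 0"
  shows "cheb (cos x) (Suc k) - cheb (cos x) k = 2 * cos (real k * x)"
proof -
  have s: "sin x ^ 2 = 1 - cos x ^ 2" by (simp add: sin_squared_eq)
  have "real (Suc k) * x = real k * x + x" by (simp add: algebra_simps)
  hence "cheb (cos x) (Suc k) - cheb (cos x) k = (sin (real k * x + x) - sin (real k * x)) * (1 + cos x) / sin x - (cos (real k * x + x) - cos (real k * x))"
    unfolding cheb_closed_form[OF assms] using assms by (simp add: field_simps)
  also have "\<dots> = 2 * cos (real k * x)"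
    unfolding sin_add cos_add using assms s by (simp add: field_simps power2_eq_square) (simp add: cos_sin_sq_mult)
  finally show ?thesis .
qed

lemma cheb_plus_Suc:
  assumes "sin x \<noteq> 0"
  shows "cheb (cos x) k + cheb (cos x) (Suc k) = 2 * (1 + cos x) * sin (real k * x) / sin x"
proof -
  have s: "sin x ^ 2 = 1 - cos x ^ 2" by (simp add: sin_squared_eq)
  have "real (Suc k) * x = real k * x + x" by (simp add: algebra_simps)
  hence "cheb (cos x) k + cheb (cos x) (Suc k) = (sin (real k * x) + sin (real k * x + x)) * (1 + cos x) / sin x - (cos (real k * x) + cos (real k * x + x))"
    unfolding cheb_closed_form[OF assms] using assms by (simp add: field_simps)
  also have "\<dots> = 2 * (1 + cos x) * sin (real k * x) / sin x"
    unfolding sin_add cos_add using assms s by (simp add: field_simps power2_eq_square) (simp add: cos_sin_sq_mult)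
  finally show ?thesis .
qed

lemma x_cos_le_sin:
  fixes x :: real
  assumes "0 \<le> x" "x \<le> pi"
  shows "x * cos x \<le> sin x"
proof -
  let ?f = "\<lambda>x. sin x - x * cos x"
  have "?f 0 \<le> ?f x"
  proof (rule DERIV_nonneg_imp_nondecreasing[OF assms(1)])
    fix u assume u: "0 \<le> u" "u \<le> x"
    have "(?f has_real_derivative u * sin u) (at u)"
      by (auto intro!: derivative_eq_intros simp: field_simps)
    moreover have "u * sin u \<ge> 0" using u assms by (intro mult_nonneg_nonneg sin_ge_zero) auto
    ultimately show "\<exists>y. (?f has_real_derivative y) (at u) \<and> 0 \<le> y" by blast
  qed
  thus ?thesis by simp
qed

text \<open>Bounds, rational in \<open>n\<close>, for the factor \<open>gain\<close> by which \<open>sin\<^sup>2(k \<theta>\<^sub>+)\<close> is multiplied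
  in the success probability, and for the \<open>\<lambda>\<^sub>-\<close> amplitude.\<close>

definition "gain_lower (x::real) = (2*x-2)^2 * ((x+1)*(x-1))^2 / ((2*x+6) * x^2 * (x+1) * (x+3)^2 * 2)"
definition "gain_upper (x::real) = (2*x+6) * (x*(x+3))^2 / (x^2 * (x+1) * (x-1)^2 * (2 - 2/x))"
definition "amp_neg_max (x::real) = 4*(x+1)/(x*(x-1))"

definition "err_bound (x::real) = (x+1)/x^2 + \<bar>gain_upper x - 1\<bar> + \<bar>gain_lower x - 1\<bar> + 4 * gain_upper x / x + gain_upper x / sqrt x
   + (x+1) * sqrt x * (amp_neg_max x)^2 + (x+1) * (amp_neg_max x)^2"

lemma two_abs_mult_le: "c > 0 \<Longrightarrow> 2 * \<bar>a\<bar> * \<bar>b\<bar> \<le> a\<^sup>2 / c + c * (b::real)\<^sup>2"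
proof -
  assume c: "c > 0"
  have "0 \<le> (\<bar>a\<bar> - c * \<bar>b\<bar>)\<^sup>2 / c" using c by simp
  also have "(\<bar>a\<bar> - c * \<bar>b\<bar>)\<^sup>2 / c = a\<^sup>2 / c + c * b\<^sup>2 - 2 * \<bar>a\<bar> * \<bar>b\<bar>"
    using c by (simp add: power2_eq_square field_simps)
  finally show ?thesis by simp
qed

lemma gain_field_identity:
  fixes N t R d e a W M :: real
  assumes "N \<noteq> 0" "M \<noteq> 0" "t \<noteq> 0" "R \<noteq> 0" "d \<noteq> 0" "e \<noteq> 0"
  shows "8 * t * (1 / N) * a\<^sup>2 * ((1 / N) * (1 / (N * M)) * W\<^sup>2) / (2 * t * R)\<^sup>2 / ((d / N) * e)
    = (2 * a\<^sup>2 / (t * d)) * (W\<^sup>2 / (N\<^sup>2 * M)) / R\<^sup>2 / e"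
  using assms by (simp add: field_simps power2_eq_square)

locale large_params =
  fixes n t :: nat
  assumes n10: "n \<ge> 10" and t1: "t \<ge> 1" and tb: "2 * t \<le> n + 1"
begin

abbreviation "N \<equiv> real n"
text \<open>\<open>gap = n (1 - \<lambda>\<^sub>+)\<close>; it is of order \<open>t / n\<close> since \<open>gap * gap_conj = 8t\<close>.\<close>

definition "gap = (real n + 3 - disc_root n t) / 2"
definition "gap_conj = real n + 3 + disc_root n t"

lemma disc_root_bounds: "disc_root n t \<ge> N - 1" "disc_root n t \<le> N + 3" "(disc_root n t)\<^sup>2 = (N + 3)\<^sup>2 - 16 * real t"
  using disc_root_facts[OF tb] by auto

lemma param_bounds: "2 * real t \<le> N + 1" "real t \<ge> 1" "N \<ge> 10" using tb t1 n10 by linarith+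

lemma gap_mult_gap_conj: "gap * gap_conj = 8 * real t"
proof -
  have "gap * gap_conj = ((N + 3)\<^sup>2 - (disc_root n t)\<^sup>2) / 2" unfolding gap_def gap_conj_def by (simp add: power2_eq_square algebra_simps)
  thus ?thesis using disc_root_bounds(3) by simp
qed

lemma gap_conj_bounds: "gap_conj \<ge> 2 * N + 2" "gap_conj \<le> 2 * N + 6" using disc_root_bounds unfolding gap_conj_def by auto

lemma gap_bounds: "gap > 0" "gap \<le> 2" "gap \<le> 4 * real t / N" "gap \<ge> real t / N"
proof -
  have Qp: "gap_conj > 0" using gap_conj_bounds param_bounds by linarith
  have dQ: "gap = 8 * real t / gap_conj" using gap_mult_gap_conj Qp by (simp add: field_simps)
  show "gap > 0" unfolding dQ using Qp param_bounds by simp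
  show "gap \<le> 2" using disc_root_bounds unfolding gap_def by simp
  show "gap \<le> 4 * real t / N" unfolding dQ using gap_conj_bounds param_bounds Qp
    by (simp add: field_simps)
  show "gap \<ge> real t / N" unfolding dQ using gap_conj_bounds param_bounds Qp
    by (simp add: field_simps)
qed

lemma mu_pos_eq: "mu_pos n t = N - gap" by (simp add: mu_pos_def gap_def field_simps)
lemma lam_pos_eq: "lam_pos n t = 1 - gap / N" using param_bounds by (simp add: lam_pos_def mu_pos_eq field_simps)
lemma lam_pos_bounds: "lam_pos n t \<ge> 1/2" "lam_pos n t < 1"
proof -
  have "gap / N \<le> 2 / N" using gap_bounds param_bounds by (simp add: divide_right_mono)
  moreover have "2 / N \<le> 1/2" using param_bounds by (simp add: field_simps)
  ultimately show "lam_pos n t \<ge> 1/2" unfolding lam_pos_eq by linarith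
  show "lam_pos n t < 1" unfolding lam_pos_eq using gap_bounds param_bounds by simp
qed

lemma mu_neg_bounds: "mu_neg n t \<ge> -3" "mu_neg n t \<le> -1" using disc_root_bounds by (auto simp: mu_neg_def)
lemma lam_neg_bounds: "\<bar>lam_neg n t\<bar> \<le> 1/2"
proof -
  have "\<bar>mu_neg n t\<bar> \<le> 3" using mu_neg_bounds by auto
  hence "\<bar>mu_neg n t\<bar> / N \<le> 3 / N" using param_bounds by (simp add: divide_right_mono)
  moreover have "3 / N \<le> 1/2" using param_bounds by (simp add: field_simps)
  ultimately have "\<bar>mu_neg n t\<bar> / N \<le> 1/2" by linarith
  thus ?thesis unfolding lam_neg_def using param_bounds by (simp add: abs_div)
qed

lemma lam_alt_bounds: "lam_alt n > 0" "lam_alt n \<le> 1/2" using param_bounds by (auto simp: lam_alt_def field_simps)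

definition "theta_pos = arccos (lam_pos n t)"
definition "theta_neg = arccos (lam_neg n t)"
definition "theta_alt = arccos (lam_alt n)"

lemma arccos_facts:
  assumes "\<bar>l\<bar> < 1"
  shows "cos (arccos l) = l" "sin (arccos l) = sqrt (1 - l\<^sup>2)" "sin (arccos l) > 0"
proof -
  show "cos (arccos l) = l" using assms by (intro cos_arccos) auto
  show s: "sin (arccos l) = sqrt (1 - l\<^sup>2)" using assms by (intro sin_arccos) auto
  have "l\<^sup>2 < 1" using assms by (simp add: abs_square_less_1)
  thus "sin (arccos l) > 0" unfolding s by simp
qed

lemma lam_pos_abs: "\<bar>lam_pos n t\<bar> < 1" using lam_pos_bounds by auto
lemma lam_neg_abs: "\<bar>lam_neg n t\<bar> < 1" using lam_neg_bounds by auto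
lemma lam_alt_abs: "\<bar>lam_alt n\<bar> < 1" using lam_alt_bounds by auto

lemma theta_pos_facts: "cos theta_pos = lam_pos n t" "sin theta_pos = sqrt (1 - (lam_pos n t)\<^sup>2)" "sin theta_pos > 0"
  "theta_pos > 0" "theta_pos \<le> pi / 2"
proof -
  show "cos theta_pos = lam_pos n t" "sin theta_pos = sqrt (1 - (lam_pos n t)\<^sup>2)" "sin theta_pos > 0"
    using arccos_facts[OF lam_pos_abs] by (auto simp: theta_pos_def)
  show "theta_pos \<le> pi / 2" unfolding theta_pos_def using lam_pos_bounds by (intro arccos_le_pi2) auto
  have "theta_pos \<ge> 0" unfolding theta_pos_def using lam_pos_abs by (intro arccos_lbound) auto
  moreover have "theta_pos \<noteq> 0" using \<open>cos theta_pos = lam_pos n t\<close> lam_pos_bounds by auto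
  ultimately show "theta_pos > 0" by simp
qed

lemma theta_neg_facts: "cos theta_neg = lam_neg n t" "sin theta_neg \<ge> 1/2"
proof -
  show "cos theta_neg = lam_neg n t" using arccos_facts[OF lam_neg_abs] by (simp add: theta_neg_def)
  have "\<bar>lam_neg n t\<bar> \<le> \<bar>1/2\<bar>" using lam_neg_bounds by simp
  hence "(lam_neg n t)\<^sup>2 \<le> (1/2)\<^sup>2" by (simp only: abs_le_square_iff)
  hence "1/4 \<le> 1 - (lam_neg n t)\<^sup>2" by (simp add: power2_eq_square)
  hence "sqrt (1/4) \<le> sqrt (1 - (lam_neg n t)\<^sup>2)" by (rule real_sqrt_le_mono)
  moreover have "sqrt (1/4) = (1/2::real)" by (simp add: real_sqrt_divide)
  ultimately show "sin theta_neg \<ge> 1/2" using arccos_facts[OF lam_neg_abs] by (simp add: theta_neg_def)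
qed

lemma theta_alt_facts: "cos theta_alt = lam_alt n" "sin theta_alt \<noteq> 0"
  using arccos_facts[OF lam_alt_abs] by (auto simp: theta_alt_def)

lemma wt_amp_sq: "(wt_amp n)\<^sup>2 = 1 / N" using param_bounds by (simp add: wt_amp_def power_divide)
lemma unif_amp_sq: "(unif_amp n)\<^sup>2 = 1 / (N * (N + 1))" using param_bounds by (simp add: unif_amp_def power_divide)
lemma unif_amp_pos: "unif_amp n > 0" using param_bounds by (simp add: unif_amp_def)
lemma wt_amp_pos: "wt_amp n > 0" using param_bounds by (simp add: wt_amp_def)
lemma unif_amp_le: "unif_amp n \<le> 1 / N"
proof -
  have "sqrt (N * N) \<le> sqrt (N * (N + 1))" using param_bounds by (intro real_sqrt_le_mono) (simp add: algebra_simps)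
  hence "N \<le> sqrt (N * (N + 1))" using param_bounds by simp
  thus ?thesis unfolding unif_amp_def using param_bounds by (intro divide_left_mono) auto
qed

lemma wt_amp_al_alt: "wt_amp n * al_alt n = unif_amp n / (N + 1)"
proof -
  have "wt_amp n * al_alt n = (wt_amp n)\<^sup>2 * unif_amp n / (1 + 1 / N)" by (simp add: al_alt_def beta_alt_def lam_alt_def power2_eq_square)
  thus ?thesis unfolding wt_amp_sq using param_bounds by (simp add: field_simps)
qed

lemma birth_amp_eq: "birth_amp n = unif_amp n * (N - 1) / (N + 1)"
  unfolding birth_amp_def using wt_amp_al_alt param_bounds by (simp add: field_simps)

definition "osc_alt k = 2 * cos (real k * theta_alt)"
definition "amp_alt k = wt_amp n * al_alt n * osc_alt k + (-1)^k * birth_amp n"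
definition "amp_pos k = 2 * wt_amp n * (beta_pos n t * a_pos n t) * sin (real k * theta_pos) / sin theta_pos"
definition "amp_neg k = 2 * wt_amp n * (beta_neg n t * a_neg n t) * sin (real k * theta_neg) / sin theta_neg"

lemma lam_pos_ne: "1 + lam_pos n t \<noteq> 0" using lam_pos_bounds by linarith
lemma lam_neg_ne: "1 + lam_neg n t \<noteq> 0" using lam_neg_bounds by linarith

lemma cheb_pos_pair: "al_pos n t * a_pos n t * (cheb (lam_pos n t) k + cheb (lam_pos n t) (Suc k)) = 2 * (beta_pos n t * a_pos n t) * sin (real k * theta_pos) / sin theta_pos"
proof -
  have h: "cheb (lam_pos n t) k + cheb (lam_pos n t) (Suc k) = 2 * (1 + lam_pos n t) * sin (real k * theta_pos) / sin theta_pos"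
    using cheb_plus_Suc[of theta_pos k] theta_pos_facts by simp
  have "sin theta_pos \<noteq> 0" using theta_pos_facts by simp
  have b: "beta_pos n t = al_pos n t * (1 + lam_pos n t)" using lam_pos_ne by (simp add: al_pos_def)
  show ?thesis unfolding h b by (simp add: algebra_simps)
qed

lemma cheb_neg_pair: "al_neg n t * a_neg n t * (cheb (lam_neg n t) k + cheb (lam_neg n t) (Suc k)) = 2 * (beta_neg n t * a_neg n t) * sin (real k * theta_neg) / sin theta_neg"
proof -
  have s: "sin theta_neg \<noteq> 0" using theta_neg_facts by linarith
  have h: "cheb (lam_neg n t) k + cheb (lam_neg n t) (Suc k) = 2 * (1 + lam_neg n t) * sin (real k * theta_neg) / sin theta_neg"
    using cheb_plus_Suc[OF s, of k] theta_neg_facts by simp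
  have b: "beta_neg n t = al_neg n t * (1 + lam_neg n t)" using lam_neg_ne by (simp add: al_neg_def)
  show ?thesis unfolding h b by (simp add: algebra_simps)
qed

lemma cheb_alt_diff: "cheb (lam_alt n) (Suc k) - cheb (lam_alt n) k = osc_alt k"
  using cheb_Suc_minus[of theta_alt k] theta_alt_facts by (simp add: osc_alt_def)

lemma success_amplitudes:
  "real t * (wt_amp n * (y_head n t k + y_tail n t (Suc k)) + (-1)^k * birth_amp n)\<^sup>2
     + real t * (- wt_amp n * (y_tail n t k + y_head n t (Suc k)) + (-1)^k * birth_amp n)\<^sup>2
   = 2 * real t * (amp_alt k)\<^sup>2 + 2 * real t * (amp_pos k + amp_neg k)\<^sup>2"
proof -
  have e1: "y_head n t k + y_tail n t (Suc k) = al_alt n * (cheb (lam_alt n) (Suc k) - cheb (lam_alt n) k)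
     + al_pos n t * a_pos n t * (cheb (lam_pos n t) k + cheb (lam_pos n t) (Suc k)) + al_neg n t * a_neg n t * (cheb (lam_neg n t) k + cheb (lam_neg n t) (Suc k))"
    by (simp add: y_tail_def y_head_def algebra_simps)
  have e2: "y_tail n t k + y_head n t (Suc k) = - al_alt n * (cheb (lam_alt n) (Suc k) - cheb (lam_alt n) k)
     + al_pos n t * a_pos n t * (cheb (lam_pos n t) k + cheb (lam_pos n t) (Suc k)) + al_neg n t * a_neg n t * (cheb (lam_neg n t) k + cheb (lam_neg n t) (Suc k))"
    by (simp add: y_tail_def y_head_def algebra_simps)
  have X: "wt_amp n * (y_head n t k + y_tail n t (Suc k)) + (-1)^k * birth_amp n = amp_alt k + (amp_pos k + amp_neg k)"
    unfolding e1 cheb_alt_diff cheb_pos_pair cheb_neg_pair amp_alt_def amp_pos_def amp_neg_def by (simp add: algebra_simps)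
  have Y: "- wt_amp n * (y_tail n t k + y_head n t (Suc k)) + (-1)^k * birth_amp n = amp_alt k - (amp_pos k + amp_neg k)"
    unfolding e2 cheb_alt_diff cheb_pos_pair cheb_neg_pair amp_alt_def amp_pos_def amp_neg_def by (simp add: algebra_simps)
  show ?thesis unfolding X Y by (simp add: power2_eq_square algebra_simps)
qed

lemma amp_alt_abs_le: "\<bar>amp_alt k\<bar> \<le> 1 / N"
proof -
  have "\<bar>osc_alt k\<bar> \<le> 2" using abs_cos_le_one[of "real k * theta_alt"] by (simp add: osc_alt_def abs_mult)
  hence "\<bar>wt_amp n * al_alt n * osc_alt k\<bar> \<le> unif_amp n / (N + 1) * 2"
  proof -
    have p: "unif_amp n / (N + 1) > 0" using unif_amp_pos param_bounds by simp
    have "unif_amp n / (N + 1) * \<bar>osc_alt k\<bar> \<le> unif_amp n / (N + 1) * 2"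
      using p \<open>\<bar>osc_alt k\<bar> \<le> 2\<close> by (intro mult_left_mono) auto
    thus ?thesis unfolding wt_amp_al_alt abs_mult using p unif_amp_pos by simp
  qed
  moreover have "\<bar>(-1)^k * birth_amp n\<bar> = unif_amp n * (N - 1) / (N + 1)"
    using unif_amp_pos param_bounds by (simp add: birth_amp_eq abs_mult)
  ultimately have "\<bar>amp_alt k\<bar> \<le> unif_amp n / (N + 1) * 2 + unif_amp n * (N - 1) / (N + 1)"
    unfolding amp_alt_def using abs_triangle_ineq by (smt (verit))
  also have "\<dots> = unif_amp n"
  proof -
    have "unif_amp n / (N + 1) * 2 + unif_amp n * (N - 1) / (N + 1) = (unif_amp n * 2 + unif_amp n * (N - 1)) / (N + 1)"
      by (simp add: add_divide_distrib)
    also have "unif_amp n * 2 + unif_amp n * (N - 1) = unif_amp n * (N + 1)" by (simp add: algebra_simps)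
    finally show ?thesis using param_bounds by simp
  qed
  finally show ?thesis using unif_amp_le by linarith
qed

lemma a_pos_eq: "a_pos n t = 2 * real t - gap" by (simp add: a_pos_def mu_pos_eq)
lemma a_neg_bounds: "\<bar>a_neg n t\<bar> \<le> N + 1"
  using mu_neg_bounds param_bounds by (simp add: a_neg_def abs_le_iff)

lemma beta_neg_numerator: "a_pos n t * du_free n - 2 * real t * du_mean n = wt_amp n * unif_amp n * (2 * real t - N * gap)"
  unfolding a_pos_eq du_free_def du_mean_def by (simp add: algebra_simps)

lemma amp_neg_abs_le: "\<bar>amp_neg k\<bar> \<le> 4 * (N + 1) / (N * (N - 1))"
proof -
  have R: "disc_root n t \<ge> N - 1" "N - 1 > 0" using disc_root_bounds param_bounds by auto
  have w: "\<bar>2 * real t - N * gap\<bar> \<le> 2 * N"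
  proof -
    have "N * gap \<le> N * 2" using gap_bounds param_bounds by (intro mult_left_mono) auto
    moreover have "N * gap \<ge> 0" using gap_bounds param_bounds by simp
    ultimately show ?thesis using param_bounds unfolding abs_le_iff by linarith
  qed
  have b: "beta_neg n t * a_neg n t = a_neg n t * (wt_amp n * unif_amp n * (2 * real t - N * gap)) / (2 * real t * disc_root n t)"
    unfolding beta_neg_def beta_neg_numerator by simp
  have "\<bar>beta_neg n t * a_neg n t\<bar> = \<bar>a_neg n t\<bar> * (wt_amp n * unif_amp n) * \<bar>2 * real t - N * gap\<bar> / (2 * real t * disc_root n t)"
    unfolding b using wt_amp_pos unif_amp_pos R param_bounds by (simp add: abs_mult abs_div)
  also have "\<dots> \<le> (N + 1) * (wt_amp n * unif_amp n) * (2 * N) / (2 * 1 * (N - 1))"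
  proof (rule frac_le)
    show "0 \<le> (N + 1) * (wt_amp n * unif_amp n) * (2 * N)" using wt_amp_pos unif_amp_pos param_bounds by simp
    show "\<bar>a_neg n t\<bar> * (wt_amp n * unif_amp n) * \<bar>2 * real t - N * gap\<bar> \<le> (N + 1) * (wt_amp n * unif_amp n) * (2 * N)"
      using a_neg_bounds w wt_amp_pos unif_amp_pos by (intro mult_mono) auto
    show "0 < 2 * 1 * (N - 1)" using R by simp
    show "2 * 1 * (N - 1) \<le> 2 * real t * disc_root n t" using R param_bounds by (intro mult_mono) auto
  qed
  also have "\<dots> = (N + 1) * (wt_amp n * unif_amp n) * N / (N - 1)" using R by (simp add: field_simps)
  finally have bb: "\<bar>beta_neg n t * a_neg n t\<bar> \<le> (N + 1) * (wt_amp n * unif_amp n) * N / (N - 1)" .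
  have "\<bar>amp_neg k\<bar> = 2 * wt_amp n * \<bar>beta_neg n t * a_neg n t\<bar> * \<bar>sin (real k * theta_neg)\<bar> / sin theta_neg"
    unfolding amp_neg_def using wt_amp_pos theta_neg_facts by (simp add: abs_mult abs_div)
  also have "\<dots> \<le> 2 * wt_amp n * ((N + 1) * (wt_amp n * unif_amp n) * N / (N - 1)) * 1 / (1/2)"
  proof (rule frac_le)
    show "0 \<le> 2 * wt_amp n * ((N + 1) * (wt_amp n * unif_amp n) * N / (N - 1)) * 1" using wt_amp_pos unif_amp_pos R by simp
    show "2 * wt_amp n * \<bar>beta_neg n t * a_neg n t\<bar> * \<bar>sin (real k * theta_neg)\<bar> \<le> 2 * wt_amp n * ((N + 1) * (wt_amp n * unif_amp n) * N / (N - 1)) * 1"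
      using bb wt_amp_pos unif_amp_pos R param_bounds by (intro mult_mono) auto
  qed (use theta_neg_facts in auto)
  also have "\<dots> = 4 * (wt_amp n)\<^sup>2 * unif_amp n * N * (N + 1) / (N - 1)" by (simp add: power2_eq_square field_simps)
  also have "\<dots> = 4 * unif_amp n * (N + 1) / (N - 1)" unfolding wt_amp_sq using param_bounds by (simp add: field_simps)
  also have "\<dots> \<le> 4 * (1 / N) * (N + 1) / (N - 1)"
    using unif_amp_le R by (intro divide_right_mono mult_right_mono) auto
  finally show ?thesis by (simp add: field_simps)
qed

definition "W_pos = N * (N - mu_neg n t) - 2 * real t"
definition "gain = 8 * real t * (wt_amp n)\<^sup>2 * (beta_pos n t * a_pos n t)\<^sup>2 / (sin theta_pos)\<^sup>2"

lemma amp_pos_sq: "2 * real t * (amp_pos k)\<^sup>2 = gain * (sin (real k * theta_pos))\<^sup>2"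
  unfolding amp_pos_def gain_def by (simp add: power2_eq_square field_simps)

lemma W_pos_bounds: "W_pos \<ge> (N + 1) * (N - 1)" "W_pos \<le> N * (N + 3)"
proof -
  have "N * (N + 1) \<le> N * (N - mu_neg n t)" "N * (N - mu_neg n t) \<le> N * (N + 3)"
    using mu_neg_bounds param_bounds by (intro mult_left_mono; simp)+
  thus "W_pos \<ge> (N + 1) * (N - 1)" "W_pos \<le> N * (N + 3)" unfolding W_pos_def using param_bounds by (simp_all add: algebra_simps)
qed

lemma beta_pos_numerator: "2 * real t * du_mean n - a_neg n t * du_free n = wt_amp n * unif_amp n * W_pos"
  unfolding W_pos_def du_mean_def du_free_def a_neg_def by (simp add: algebra_simps)

lemma sin_theta_pos_sq: "(sin theta_pos)\<^sup>2 = (gap / N) * (2 - gap / N)"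
proof -
  have "(sin theta_pos)\<^sup>2 = 1 - (cos theta_pos)\<^sup>2" by (simp add: sin_squared_eq)
  thus ?thesis unfolding theta_pos_facts(1) lam_pos_eq by (simp add: power2_eq_square algebra_simps)
qed

lemma a_pos_ratio: "2 * (a_pos n t)\<^sup>2 / (real t * gap) = (gap_conj - 4)\<^sup>2 / gap_conj"
proof -
  have Qp: "gap_conj > 0" using gap_conj_bounds param_bounds by linarith
  have tq: "real t = gap * gap_conj / 8" using gap_mult_gap_conj by simp
  have a: "a_pos n t = gap * (gap_conj - 4) / 4" unfolding a_pos_eq tq by (simp add: field_simps)
  show ?thesis unfolding a tq using Qp gap_bounds by (simp add: field_simps power2_eq_square)
qed

lemma gain_eq: "gain = ((gap_conj - 4)\<^sup>2 / gap_conj) * (W_pos\<^sup>2 / (N\<^sup>2 * (N + 1))) / (disc_root n t)\<^sup>2 / (2 - gap / N)"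
proof -
  have Rp: "disc_root n t > 0" using disc_root_bounds param_bounds by linarith
  have d2: "2 - gap / N > 0"
  proof -
    have "gap / N \<le> 2 / N" using gap_bounds param_bounds by (simp add: divide_right_mono)
    moreover have "2 / N < 2" using param_bounds by (simp add: field_simps)
    ultimately show ?thesis by linarith
  qed
  have b: "beta_pos n t * a_pos n t = a_pos n t * (wt_amp n * unif_amp n * W_pos) / (2 * real t * disc_root n t)"
    unfolding beta_pos_def beta_pos_numerator by simp
  have "gain = 8 * real t * (wt_amp n)\<^sup>2 * (a_pos n t)\<^sup>2 * ((wt_amp n)\<^sup>2 * (unif_amp n)\<^sup>2 * W_pos\<^sup>2) / (2 * real t * disc_root n t)\<^sup>2 / ((gap / N) * (2 - gap / N))"
    unfolding gain_def b sin_theta_pos_sq by (simp add: power_mult_distrib power_divide field_simps)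
  also have "\<dots> = (2 * (a_pos n t)\<^sup>2 / (real t * gap)) * (W_pos\<^sup>2 / (N\<^sup>2 * (N + 1))) / (disc_root n t)\<^sup>2 / (2 - gap / N)"
    unfolding wt_amp_sq unif_amp_sq using param_bounds Rp d2 gap_bounds by (intro gain_field_identity) auto
  finally show ?thesis unfolding a_pos_ratio .
qed

lemma gain_factor_bounds: "(gap_conj - 4)\<^sup>2 / gap_conj \<ge> (2*N-2)\<^sup>2 / (2*N+6)" "(gap_conj - 4)\<^sup>2 / gap_conj \<le> 2*N+6"
  "W_pos\<^sup>2 / (N\<^sup>2 * (N + 1)) \<ge> ((N+1)*(N-1))\<^sup>2 / (N\<^sup>2 * (N + 1))"
  "W_pos\<^sup>2 / (N\<^sup>2 * (N + 1)) \<le> (N*(N+3))\<^sup>2 / (N\<^sup>2 * (N + 1))"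
  "(disc_root n t)\<^sup>2 \<ge> (N-1)\<^sup>2" "(disc_root n t)\<^sup>2 \<le> (N+3)\<^sup>2"
  "2 - gap / N \<ge> 2 - 2 / N" "2 - gap / N \<le> 2"
proof -
  have Q: "2*N+2 \<le> gap_conj" "gap_conj \<le> 2*N+6" using gap_conj_bounds by auto
  have a: "(2*N-2)\<^sup>2 \<le> (gap_conj - 4)\<^sup>2" using Q param_bounds by (intro power_mono) auto
  show "(gap_conj - 4)\<^sup>2 / gap_conj \<ge> (2*N-2)\<^sup>2 / (2*N+6)"
    by (rule frac_le) (use a Q param_bounds in auto)
  have "(gap_conj - 4)\<^sup>2 \<le> gap_conj\<^sup>2" using Q param_bounds by (intro power_mono) auto
  hence "(gap_conj - 4)\<^sup>2 / gap_conj \<le> gap_conj\<^sup>2 / gap_conj" using Q param_bounds by (intro divide_right_mono) auto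
  also have "\<dots> = gap_conj" using Q param_bounds by (simp add: power2_eq_square)
  finally show "(gap_conj - 4)\<^sup>2 / gap_conj \<le> 2*N+6" using Q by linarith
  have w: "0 \<le> (N+1)*(N-1)" using param_bounds by simp
  have W0: "0 \<le> W_pos" using W_pos_bounds w by linarith
  show "W_pos\<^sup>2 / (N\<^sup>2 * (N + 1)) \<ge> ((N+1)*(N-1))\<^sup>2 / (N\<^sup>2 * (N + 1))"
    using W_pos_bounds w W0 param_bounds by (intro divide_right_mono power_mono) auto
  show "W_pos\<^sup>2 / (N\<^sup>2 * (N + 1)) \<le> (N*(N+3))\<^sup>2 / (N\<^sup>2 * (N + 1))"
    using W_pos_bounds w W0 param_bounds by (intro divide_right_mono power_mono) auto
  show "(disc_root n t)\<^sup>2 \<ge> (N-1)\<^sup>2" using disc_root_bounds param_bounds by (intro power_mono) auto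
  show "(disc_root n t)\<^sup>2 \<le> (N+3)\<^sup>2" using disc_root_bounds param_bounds by (intro power_mono) auto
  have "gap / N \<le> 2 / N" using gap_bounds param_bounds by (simp add: divide_right_mono)
  thus "2 - gap / N \<ge> 2 - 2 / N" by linarith
  show "2 - gap / N \<le> 2" using gap_bounds param_bounds by simp
qed

lemma gain_ge_lower: "gain_lower N \<le> gain"
proof -
  note F = gain_factor_bounds
  have p: "2 - 2 / N > 0" "(N - 1)\<^sup>2 > 0" using param_bounds by (auto simp: field_simps)
  have l: "gain_lower N = ((2*N-2)\<^sup>2 / (2*N+6)) * (((N+1)*(N-1))\<^sup>2 / (N\<^sup>2 * (N + 1))) / (N+3)\<^sup>2 / 2"
    unfolding gain_lower_def using param_bounds by (simp add: field_simps)
  have m: "((2*N-2)\<^sup>2 / (2*N+6)) * (((N+1)*(N-1))\<^sup>2 / (N\<^sup>2 * (N + 1)))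
     \<le> ((gap_conj - 4)\<^sup>2 / gap_conj) * (W_pos\<^sup>2 / (N\<^sup>2 * (N + 1)))"
    using F(1,3) param_bounds gap_conj_bounds by (intro mult_mono) auto
  have h1: "((2*N-2)\<^sup>2 / (2*N+6)) * (((N+1)*(N-1))\<^sup>2 / (N\<^sup>2 * (N + 1))) / (N+3)\<^sup>2
     \<le> ((gap_conj - 4)\<^sup>2 / gap_conj) * (W_pos\<^sup>2 / (N\<^sup>2 * (N + 1))) / (disc_root n t)\<^sup>2"
    by (rule frac_le) (use m F(5,6) p param_bounds gap_conj_bounds in auto)
  have "((2*N-2)\<^sup>2 / (2*N+6)) * (((N+1)*(N-1))\<^sup>2 / (N\<^sup>2 * (N + 1))) / (N+3)\<^sup>2 / 2
     \<le> ((gap_conj - 4)\<^sup>2 / gap_conj) * (W_pos\<^sup>2 / (N\<^sup>2 * (N + 1))) / (disc_root n t)\<^sup>2 / (2 - gap / N)"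
    by (rule frac_le) (use h1 F(7,8) p param_bounds gap_conj_bounds in auto)
  thus ?thesis unfolding l gain_eq .
qed

lemma gain_le_upper: "gain \<le> gain_upper N"
proof -
  note F = gain_factor_bounds
  have p: "2 - 2 / N > 0" "(N - 1)\<^sup>2 > 0" using param_bounds by (auto simp: field_simps)
  have u: "gain_upper N = (2*N+6) * ((N*(N+3))\<^sup>2 / (N\<^sup>2 * (N + 1))) / (N-1)\<^sup>2 / (2 - 2 / N)"
    unfolding gain_upper_def using param_bounds by (simp add: field_simps)
  have Qp: "gap_conj > 0" using gap_conj_bounds param_bounds by linarith
  have m: "((gap_conj - 4)\<^sup>2 / gap_conj) * (W_pos\<^sup>2 / (N\<^sup>2 * (N + 1))) \<le> (2*N+6) * ((N*(N+3))\<^sup>2 / (N\<^sup>2 * (N + 1)))"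
    using F(2,4) param_bounds Qp by (intro mult_mono) auto
  have h0: "((gap_conj - 4)\<^sup>2 / gap_conj) * (W_pos\<^sup>2 / (N\<^sup>2 * (N + 1))) / (disc_root n t)\<^sup>2
     \<le> (2*N+6) * ((N*(N+3))\<^sup>2 / (N\<^sup>2 * (N + 1))) / (N-1)\<^sup>2"
    by (rule frac_le) (use m F(5) p param_bounds in auto)
  have "((gap_conj - 4)\<^sup>2 / gap_conj) * (W_pos\<^sup>2 / (N\<^sup>2 * (N + 1))) / (disc_root n t)\<^sup>2 / (2 - gap / N)
     \<le> (2*N+6) * ((N*(N+3))\<^sup>2 / (N\<^sup>2 * (N + 1))) / (N-1)\<^sup>2 / (2 - 2 / N)"
    by (rule frac_le) (use h0 F(7) p param_bounds in auto)
  thus ?thesis unfolding u gain_eq .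
qed

end

context large_params
begin

lemma lambda_m_eq_lam_pos: "lambda_m n t = lam_pos n t"
  by (simp add: lambda_m_def lam_pos_def mu_pos_def disc_root_def field_simps)

abbreviation "kf \<equiv> k_f n t"

lemma k_f_theta_bounds: "real kf * theta_pos \<le> pi / 2" "real kf * theta_pos > pi / 2 - theta_pos"
proof -
  let ?x = "pi / (2 * theta_pos)"
  have xp: "?x > 0" using theta_pos_facts by simp
  have k: "real kf = of_int \<lfloor>?x\<rfloor>"
    unfolding k_f_def lambda_m_eq_lam_pos theta_pos_def[symmetric] using xp by simp
  have f: "of_int \<lfloor>?x\<rfloor> \<le> ?x" "?x < of_int \<lfloor>?x\<rfloor> + 1" by linarith+
  have "real kf * theta_pos \<le> ?x * theta_pos" unfolding k using f theta_pos_facts by (intro mult_right_mono) auto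
  thus "real kf * theta_pos \<le> pi / 2" using theta_pos_facts by simp
  have "?x * theta_pos < (real kf + 1) * theta_pos" unfolding k using f theta_pos_facts by (intro mult_strict_right_mono) auto
  thus "real kf * theta_pos > pi / 2 - theta_pos" using theta_pos_facts by (simp add: algebra_simps)
qed

lemma cos_k_f_bounds: "0 \<le> cos (real kf * theta_pos)" "cos (real kf * theta_pos) \<le> sin theta_pos"
proof -
  have k0: "real kf * theta_pos \<ge> 0" using theta_pos_facts by simp
  show "0 \<le> cos (real kf * theta_pos)" using k_f_theta_bounds k0 pi_gt_zero by (intro cos_ge_zero) linarith+
  have "cos (real kf * theta_pos) = sin (pi / 2 - real kf * theta_pos)" by (simp add: cos_sin_eq)
  also have "\<dots> \<le> sin theta_pos" using k_f_theta_bounds k0 theta_pos_facts by (intro sin_monotone_2pi_le) auto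
  finally show "cos (real kf * theta_pos) \<le> sin theta_pos" .
qed

lemma sin_k_f_sq_bounds: "(sin (real kf * theta_pos))\<^sup>2 \<ge> 1 - 4 / N" "(sin (real kf * theta_pos))\<^sup>2 \<le> 1"
proof -
  have "(cos (real kf * theta_pos))\<^sup>2 \<le> (sin theta_pos)\<^sup>2" using cos_k_f_bounds by (intro power_mono) auto
  also have "(sin theta_pos)\<^sup>2 \<le> 4 / N"
  proof -
    have "gap / N \<le> 2 / N" "0 \<le> gap / N" using gap_bounds param_bounds by (auto simp: divide_right_mono)
    moreover have "2 / N \<le> 2" using param_bounds by (simp add: field_simps)
    ultimately have "(gap / N) * (2 - gap / N) \<le> (2 / N) * 2" by (intro mult_mono) auto
    thus ?thesis unfolding sin_theta_pos_sq by simp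
  qed
  finally show "(sin (real kf * theta_pos))\<^sup>2 \<ge> 1 - 4 / N" by (simp add: sin_squared_eq)
  show "(sin (real kf * theta_pos))\<^sup>2 \<le> 1" using abs_sin_le_one[of "real kf * theta_pos"] by (simp add: abs_square_le_1)
qed

lemma gain_nonneg: "gain \<ge> 0"
  unfolding gain_def using param_bounds by simp

lemma amp_alt_term_le: "2 * real t * (amp_alt k)\<^sup>2 \<le> (N + 1) / N\<^sup>2"
proof -
  have "\<bar>amp_alt k\<bar> \<le> \<bar>1 / N\<bar>" using amp_alt_abs_le param_bounds by simp
  hence "(amp_alt k)\<^sup>2 \<le> (1 / N)\<^sup>2" by (simp only: abs_le_square_iff)
  hence "2 * real t * (amp_alt k)\<^sup>2 \<le> (N + 1) * (1 / N)\<^sup>2"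
    using param_bounds by (intro mult_mono) auto
  thus ?thesis by (simp add: power_divide)
qed

lemma amp_neg_term_le: "2 * real t * (amp_neg k)\<^sup>2 \<le> (N + 1) * (amp_neg_max N)\<^sup>2"
proof -
  have "\<bar>amp_neg k\<bar> \<le> \<bar>amp_neg_max N\<bar>"
    using amp_neg_abs_le param_bounds by (simp add: amp_neg_max_def)
  hence "(amp_neg k)\<^sup>2 \<le> (amp_neg_max N)\<^sup>2" by (simp only: abs_le_square_iff)
  thus ?thesis using param_bounds by (intro mult_mono) auto
qed

lemma amp_pos_term_le: "2 * real t * (amp_pos k)\<^sup>2 \<le> gain_upper N"
proof -
  have "(sin (real k * theta_pos))\<^sup>2 \<le> 1"
    using abs_sin_le_one[of "real k * theta_pos"] by (simp add: abs_square_le_1)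
  hence "gain * (sin (real k * theta_pos))\<^sup>2 \<le> gain"
    using gain_nonneg mult_left_mono[of _ 1 gain] by auto
  thus ?thesis unfolding amp_pos_sq using gain_le_upper by linarith
qed

lemma amp_pos_term_k_f_ge:
  "1 - (\<bar>gain_lower N - 1\<bar> + 4 * gain_upper N / N) \<le> 2 * real t * (amp_pos kf)\<^sup>2"
proof -
  have "gain * (1 - 4 / N) \<le> gain * (sin (real kf * theta_pos))\<^sup>2"
    using gain_nonneg sin_k_f_sq_bounds by (intro mult_left_mono) auto
  moreover have "gain * (4 / N) \<le> gain_upper N * (4 / N)"
    using gain_le_upper param_bounds by (intro mult_right_mono) auto
  ultimately show ?thesis
    unfolding amp_pos_sq using gain_ge_lower by (simp add: algebra_simps)
qed

lemma cross_term_le: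
  "\<bar>4 * real t * (amp_pos k * amp_neg k)\<bar> \<le> gain_upper N / sqrt N + (N + 1) * sqrt N * (amp_neg_max N)\<^sup>2"
proof -
  have sN: "sqrt N > 0" using param_bounds by simp
  have "\<bar>4 * real t * (amp_pos k * amp_neg k)\<bar> = 2 * real t * (2 * \<bar>amp_pos k\<bar> * \<bar>amp_neg k\<bar>)"
    using param_bounds by (simp add: abs_mult)
  also have "\<dots> \<le> 2 * real t * ((amp_pos k)\<^sup>2 / sqrt N + sqrt N * (amp_neg k)\<^sup>2)"
    using two_abs_mult_le[OF sN] param_bounds by (intro mult_left_mono) auto
  also have "\<dots> = (2 * real t * (amp_pos k)\<^sup>2) / sqrt N + sqrt N * (2 * real t * (amp_neg k)\<^sup>2)"
    by (simp add: algebra_simps)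
  also have "\<dots> \<le> gain_upper N / sqrt N + sqrt N * ((N + 1) * (amp_neg_max N)\<^sup>2)"
    using amp_pos_term_le amp_neg_term_le sN
    by (intro add_mono divide_right_mono mult_left_mono) auto
  finally show ?thesis by (simp add: algebra_simps)
qed

lemma success_amplitudes_err:
  "\<bar>2 * real t * (amp_alt kf)\<^sup>2 + 2 * real t * (amp_pos kf + amp_neg kf)\<^sup>2 - 1\<bar> \<le> err_bound N"
proof -
  have expand: "2 * real t * (amp_alt kf)\<^sup>2 + 2 * real t * (amp_pos kf + amp_neg kf)\<^sup>2 - 1
     = 2 * real t * (amp_alt kf)\<^sup>2 + (2 * real t * (amp_pos kf)\<^sup>2 - 1)
       + 4 * real t * (amp_pos kf * amp_neg kf) + 2 * real t * (amp_neg kf)\<^sup>2"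
    by (simp add: power2_eq_square algebra_simps)
  have nonneg: "0 \<le> 2 * real t * (amp_alt kf)\<^sup>2" "0 \<le> 2 * real t * (amp_neg kf)\<^sup>2"
    "0 \<le> gain_upper N / sqrt N + (N + 1) * sqrt N * (amp_neg_max N)\<^sup>2"
    "0 \<le> (N + 1) / N\<^sup>2" "0 \<le> (N + 1) * (amp_neg_max N)\<^sup>2" "0 \<le> 4 * gain_upper N / N"
    using gain_nonneg gain_le_upper param_bounds by auto
  show ?thesis
    unfolding expand err_bound_def
    using amp_alt_term_le[of kf] amp_neg_term_le[of kf] amp_pos_term_le[of kf] amp_pos_term_k_f_ge
      cross_term_le[of kf] nonneg abs_ge_self[of "gain_upper N - 1"]
    by (simp only: abs_le_iff) linarith
qed

lemma sin_theta_pos_ge: "sin theta_pos \<ge> sqrt (real t) / N"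
proof -
  have a: "gap / N \<le> 1"
  proof -
    have "gap / N \<le> 2 / N" using gap_bounds param_bounds by (simp add: divide_right_mono)
    also have "2 / N \<le> 1" using param_bounds by simp
    finally show ?thesis .
  qed
  have b: "real t / N / N \<le> gap / N" by (rule divide_right_mono) (use gap_bounds param_bounds in auto)
  have "real t / N\<^sup>2 \<le> (gap / N) * (2 - gap / N)"
  proof -
    have "real t / N\<^sup>2 = real t / N / N" by (simp add: power2_eq_square)
    also have "\<dots> \<le> gap / N" by (rule b)
    finally have "real t / N\<^sup>2 \<le> gap / N" .
    also have "\<dots> = (gap / N) * 1" by simp
    also have "\<dots> \<le> (gap / N) * (2 - gap / N)" by (rule mult_left_mono) (use a gap_bounds param_bounds in auto)
    finally show ?thesis .
  qed
  hence "sqrt (real t / N\<^sup>2) \<le> sqrt ((sin theta_pos)\<^sup>2)" unfolding sin_theta_pos_sq by (rule real_sqrt_le_mono)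
  thus ?thesis using theta_pos_facts param_bounds by (simp add: real_sqrt_divide)
qed

lemma sin_theta_pos_le: "sin theta_pos \<le> sqrt (8 * real t) / N"
proof -
  have "(gap / N) * (2 - gap / N) \<le> (gap / N) * 2" by (rule mult_left_mono) (use gap_bounds param_bounds in auto)
  hence "(sin theta_pos)\<^sup>2 \<le> 2 * (gap / N)" unfolding sin_theta_pos_sq by simp
  also have "\<dots> \<le> 2 * (4 * real t / N / N)"
  proof -
    have "gap / N \<le> 4 * real t / N / N" by (rule divide_right_mono) (use gap_bounds param_bounds in auto)
    thus ?thesis by simp
  qed
  also have "\<dots> = 8 * real t / N\<^sup>2" by (simp add: power2_eq_square)
  finally have "sqrt ((sin theta_pos)\<^sup>2) \<le> sqrt (8 * real t / N\<^sup>2)" by (rule real_sqrt_le_mono)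
  thus ?thesis using theta_pos_facts param_bounds by (simp add: real_sqrt_divide)
qed

lemma k_f_upper: "real kf \<le> pi * N / (2 * sqrt (real t))"
proof -
  have tp: "sqrt (real t) > 0" using param_bounds by simp
  have th: "theta_pos \<ge> sqrt (real t) / N" using sin_theta_pos_ge sin_x_le_x[of theta_pos] theta_pos_facts by linarith
  have "real kf \<le> pi / (2 * theta_pos)" using k_f_theta_bounds theta_pos_facts by (simp add: field_simps)
  also have "\<dots> \<le> pi / (2 * (sqrt (real t) / N))"
    using th tp param_bounds theta_pos_facts by (intro divide_left_mono mult_left_mono) auto
  finally show ?thesis using param_bounds by (simp add: field_simps)
qed

lemma k_f_lower: "pi * N / (4 * sqrt (8 * real t)) - 1 \<le> real kf"
proof -
  have tp: "sqrt (8 * real t) > 0" using param_bounds by simp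
  have "theta_pos * (1/2) \<le> theta_pos * cos theta_pos"
    using theta_pos_facts lam_pos_bounds by (intro mult_left_mono) auto
  also have "\<dots> \<le> sin theta_pos" using theta_pos_facts by (intro x_cos_le_sin) auto
  finally have th: "theta_pos \<le> 2 * (sqrt (8 * real t) / N)" using sin_theta_pos_le by linarith
  have "pi * N / (4 * sqrt (8 * real t)) = pi / (2 * (2 * (sqrt (8 * real t) / N)))"
    using param_bounds by (simp add: field_simps)
  also have "\<dots> \<le> pi / (2 * theta_pos)"
    using th tp param_bounds theta_pos_facts by (intro divide_left_mono mult_left_mono) auto
  also have "\<dots> < real kf + 1" using k_f_theta_bounds theta_pos_facts by (simp add: field_simps)
  finally show ?thesis by simp
qed

end

lemma success_prob_k_f_err:
  assumes "sign_assignment n \<sigma>" and "is_matching t (marked_edges n \<sigma>)" and "10 \<le> n" and "1 \<le> t"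
  shows "\<bar>success_prob n \<sigma> (k_f n t) - 1\<bar> \<le> err_bound (real n)"
proof -
  interpret matched_signs_large n \<sigma> t using assms by unfold_locales auto
  interpret large_params n t using assms matching_size_bound by unfold_locales auto
  show ?thesis using success_amplitudes_err unfolding success_prob_formula success_amplitudes .
qed

lemma err_bound_tendsto_0: "(\<lambda>n. err_bound (real n)) \<longlonglongrightarrow> 0"
  unfolding err_bound_def gain_upper_def gain_lower_def amp_neg_max_def by real_asymp

lemma t_of_bounds:
  assumes "1 \<le> t_of c \<alpha> n"
  shows "real (t_of c \<alpha> n) \<le> c * real n powr \<alpha>" and "c * real n powr \<alpha> / 2 \<le> real (t_of c \<alpha> n)"
proof -
  let ?x = "c * real n powr \<alpha>"
  have "1 \<le> nat \<lfloor>?x\<rfloor>" using assms by (simp add: t_of_def)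
  hence f: "\<lfloor>?x\<rfloor> \<ge> 1" by arith
  have e: "real (t_of c \<alpha> n) = of_int \<lfloor>?x\<rfloor>" using f by (simp add: t_of_def)
  show "real (t_of c \<alpha> n) \<le> ?x" unfolding e by simp
  have "?x - 1 < of_int \<lfloor>?x\<rfloor>" "(1::real) \<le> of_int \<lfloor>?x\<rfloor>" using f by linarith+
  thus "?x / 2 \<le> real (t_of c \<alpha> n)" unfolding e by linarith
qed

lemma sqrt_t_of_bounds:
  assumes "1 \<le> t_of c \<alpha> n"
  shows "sqrt (c / 2) * real n powr (\<alpha> / 2) \<le> sqrt (real (t_of c \<alpha> n))"
    and "sqrt (real (t_of c \<alpha> n)) \<le> sqrt c * real n powr (\<alpha> / 2)"
proof -
  have s: "sqrt (real n powr \<alpha>) = real n powr (\<alpha> / 2)"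
    by (simp add: powr_half_sqrt[symmetric] powr_powr)
  have "sqrt (c / 2 * real n powr \<alpha>) \<le> sqrt (real (t_of c \<alpha> n))"
    using t_of_bounds(2)[OF assms] by (intro real_sqrt_le_mono) simp
  thus "sqrt (c / 2) * real n powr (\<alpha> / 2) \<le> sqrt (real (t_of c \<alpha> n))"
    by (simp only: real_sqrt_mult s)
  have "sqrt (real (t_of c \<alpha> n)) \<le> sqrt (c * real n powr \<alpha>)"
    using t_of_bounds(1)[OF assms] by (intro real_sqrt_le_mono)
  thus "sqrt (real (t_of c \<alpha> n)) \<le> sqrt c * real n powr (\<alpha> / 2)"
    by (simp only: real_sqrt_mult s)
qed

lemma powr_complement_mult:
  fixes x \<alpha> :: real
  assumes "x > 0"
  shows "x powr ((2 - \<alpha>) / 2) * x powr (\<alpha> / 2) = x"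
proof -
  have "(2 - \<alpha>) / 2 + \<alpha> / 2 = 1" by (simp add: field_simps)
  thus ?thesis using assms by (simp flip: powr_add)
qed

lemma eventually_ge_powr_complement:
  fixes \<alpha> B :: real
  assumes "\<alpha> \<le> 1"
  shows "\<forall>\<^sub>F n in sequentially. B \<le> real n powr ((2 - \<alpha>) / 2)"
  using eventually_ge_at_top[of "nat \<lceil>B\<^sup>2\<rceil>"] eventually_ge_at_top[of "1::nat"]
proof eventually_elim
  case (elim n)
  have "B \<le> sqrt (B\<^sup>2)" by simp
  also have "\<dots> \<le> sqrt (real n)" using elim by (intro real_sqrt_le_mono) linarith
  also have "\<dots> = real n powr (1 / 2)" by (simp add: powr_half_sqrt)
  also have "\<dots> \<le> real n powr ((2 - \<alpha>) / 2)" using assms elim by (intro powr_mono) auto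
  finally show ?case .
qed

lemma k_f_t_of_bigo:
  assumes c: "c > 0" and ev: "eventually (\<lambda>n. 1 \<le> t_of c \<alpha> n \<and> 2 * t_of c \<alpha> n \<le> n + 1) sequentially"
  shows "(\<lambda>n. real (k_f n (t_of c \<alpha> n))) \<in> O(\<lambda>n. real n powr ((2 - \<alpha>) / 2))"
proof (rule bigoI[where c = "pi / (2 * sqrt (c / 2))"])
  show "\<forall>\<^sub>F n in sequentially. norm (real (k_f n (t_of c \<alpha> n)))
      \<le> pi / (2 * sqrt (c / 2)) * norm (real n powr ((2 - \<alpha>) / 2))"
    using ev eventually_ge_at_top[of "10::nat"]
  proof eventually_elim
    case (elim n)
    interpret large_params n "t_of c \<alpha> n" using elim by unfold_locales auto
    have q: "N powr (\<alpha> / 2) > 0" using param_bounds by simp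
    have "real kf \<le> pi * N / (2 * sqrt (real (t_of c \<alpha> n)))" by (rule k_f_upper)
    also have "\<dots> \<le> pi * N / (2 * (sqrt (c / 2) * N powr (\<alpha> / 2)))"
      using sqrt_t_of_bounds(1) elim c q param_bounds by (intro divide_left_mono mult_left_mono) auto
    also have "\<dots> = pi / (2 * sqrt (c / 2)) * N powr ((2 - \<alpha>) / 2)"
      using powr_complement_mult[of N \<alpha>] param_bounds c q by (simp add: field_simps)
    finally show ?case by simp
  qed
qed

lemma k_f_t_of_bigomega:
  assumes c: "c > 0" and "\<alpha> \<le> 1"
    and ev: "eventually (\<lambda>n. 1 \<le> t_of c \<alpha> n \<and> 2 * t_of c \<alpha> n \<le> n + 1) sequentially"
  shows "(\<lambda>n. real n powr ((2 - \<alpha>) / 2)) \<in> O(\<lambda>n. real (k_f n (t_of c \<alpha> n)))"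
proof -
  define K where "K = pi / (4 * sqrt (8 * c))"
  have K: "K > 0" using c by (simp add: K_def)
  have large: "\<forall>\<^sub>F n in sequentially. 2 / K \<le> real n powr ((2 - \<alpha>) / 2)"
    by (rule eventually_ge_powr_complement) fact
  show ?thesis
  proof (rule bigoI[where c = "2 / K"])
    show "\<forall>\<^sub>F n in sequentially. norm (real n powr ((2 - \<alpha>) / 2))
        \<le> 2 / K * norm (real (k_f n (t_of c \<alpha> n)))"
      using ev eventually_ge_at_top[of "10::nat"] large
    proof eventually_elim
      case (elim n)
      interpret large_params n "t_of c \<alpha> n" using elim by unfold_locales auto
      let ?P = "N powr ((2 - \<alpha>) / 2)"
      have q: "N powr (\<alpha> / 2) > 0" using param_bounds by simp
      have "K * ?P = pi * N / (4 * (sqrt 8 * (sqrt c * N powr (\<alpha> / 2))))"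
        using powr_complement_mult[of N \<alpha>] param_bounds c q
        by (simp add: K_def real_sqrt_mult field_simps)
      also have "\<dots> \<le> pi * N / (4 * sqrt (8 * real (t_of c \<alpha> n)))"
        using sqrt_t_of_bounds(2) elim param_bounds c q
        by (intro divide_left_mono mult_left_mono) (auto simp: real_sqrt_mult)
      also have "\<dots> \<le> real kf + 1" using k_f_lower by linarith
      finally have "K * ?P \<le> real kf + 1" .
      moreover have "2 \<le> K * ?P" using elim K by (simp add: field_simps)
      ultimately have "K * ?P / 2 \<le> real kf" by linarith
      hence "?P \<le> 2 / K * real kf" using K by (simp add: field_simps)
      thus ?case by simp
    qed
  qed
qed

theorem theorem1p1:
  fixes c \<alpha> :: real
  assumes "c > 0" and "0 \<le> \<alpha>" and "\<alpha> \<le> 1"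
    and "eventually (\<lambda>n. 1 \<le> t_of c \<alpha> n \<and> 2 * t_of c \<alpha> n \<le> n + 1) sequentially"
  shows "(\<lambda>n. real (k_f n (t_of c \<alpha> n))) \<in> \<Theta>(\<lambda>n. real n powr ((2 - \<alpha>) / 2)) \<and>
      (\<forall>\<epsilon>>0. eventually (\<lambda>n. \<forall>\<sigma>. sign_assignment n \<sigma> \<and>
              is_matching (t_of c \<alpha> n) (marked_edges n \<sigma>) \<longrightarrow>
              \<bar>success_prob n \<sigma> (k_f n (t_of c \<alpha> n)) - 1\<bar> < \<epsilon>) sequentially)"
proof -
  have "(\<lambda>n. real (k_f n (t_of c \<alpha> n))) \<in> \<Theta>(\<lambda>n. real n powr ((2 - \<alpha>) / 2))"
    using k_f_t_of_bigo[OF assms(1,4)] k_f_t_of_bigomega[OF assms(1,3,4)]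
    by (intro bigthetaI) (simp_all add: bigomega_iff_bigo)
  moreover have "eventually (\<lambda>n. \<forall>\<sigma>. sign_assignment n \<sigma> \<and>
              is_matching (t_of c \<alpha> n) (marked_edges n \<sigma>) \<longrightarrow>
              \<bar>success_prob n \<sigma> (k_f n (t_of c \<alpha> n)) - 1\<bar> < \<epsilon>) sequentially" if "\<epsilon> > 0" for \<epsilon>
    using assms(4) eventually_ge_at_top[of "10::nat"] order_tendstoD(2)[OF err_bound_tendsto_0 that]
  proof eventually_elim
    case (elim n)
    thus ?case using success_prob_k_f_err[of n _ "t_of c \<alpha> n"] by fastforce
  qed
  ultimately show ?thesis by blast
qed

end
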